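(* Let $\alpha=(\alpha_\pi)_{\pi\in\mathcal P}$ be admissible weights, $(\mathcal A,\Phi)$ an algebraic probability space, and $\mathbf a=(a^{\mathsf Q}_\ell:\mathsf Q\in\mathcal F,\ell\in I^{\mathsf Q})\subset\mathcal A$ a family with $[n]$ the disjoint union of the index sets $I^{\mathsf Q}$. Put $\mathbf f(\ell)=\mathsf Q$ if $\ell\in I^{\mathsf Q}$, and suppose $\mathbf f(i)=\mathbf f(i+1)=\mathsf q$ for some $i\in[n-1]$. Define $\tilde{\mathbf a}$ by the index sets $\tilde I^{\mathsf q}=(I^{\mathsf q}\setminus\{i,i+1\})\cup\{\{i,i+1\}\}$, $\tilde I^{\mathsf Q}=I^{\mathsf Q}$ for $\mathsf Q\ne\mathsf q$, with $a^{\mathsf q}_{\{i,i+1\}}:=a^{\mathsf q}_ia^{\mathsf q}_{i+1}$ and all other elements unchanged. Let $X=x^{\mathbf f(1)}_1\cdots x^{\mathbf f(n)}_n$ and $\tilde X=x^{\mathbf f(1)}_1\cdots x^{\mathbf f(i-1)}_{i-1}x^{\mathsf q}_{\{i,i+1\}}x^{\mathbf f(i+2)}_{i+2}\cdots x^{\mathbf f(n)}_n$. Then $m_{\tilde{\mathbf a}}(\tilde X)=m_{\mathbf a}(X)$ and $$c_{\tilde{\mathbf a}}(\tilde X)=c_{\mathbf a}(X)+\sum_{\substack{\sigma=\{\beta_1,\beta_2\}\in\mathcal P(\mathbf f)\\ i\in\beta_1\ne\beta_2\ni i+1}}\alpha_\sigma\, c_{\mathbf a}(X|_{\beta_1})\,c_{\mathbf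 a}(X|_{\beta_2}).$$
   Context: Fix a finite set $\mathcal F$ of faces. For $\mathbf f\in\mathcal F^n$ ($n\ge1$), $[n]_{\mathbf f}$ is $\{1,\dots,n\}$ with faces $\ell\mapsto\mathbf f(\ell)$; $\mathcal P(\mathbf f)$ is the set of set partitions of $[n]$ with these faces, $\mathcal P=\bigcup_{\mathbf f}\mathcal P(\mathbf f)$; a finite totally ordered set $S$ with face map (e.g. a subset of $[n]$, or the quotient of $[n]$ identifying $i,i+1$) is identified with $[m]_{|S|}$ via the order-preserving bijection, so its partitions are in $\mathcal P$. $1_{\mathbf f}$: one-block partition; $\pi_{\beta_1\smile\beta_2}=(\pi\setminus\{\beta_1,\beta_2\})\cup\{\beta_1\cup\beta_2\}$; $\{\beta_1,\beta_2\}$ is a partition of the multi-faced set $\beta_1\cup\beta_2$. Reduction $\pi_{\mathrm{red}}$: quotient by $s\sim t$ ($s\le t$) iff all $r\in[s,t]$ have the same face and lie in the same block. Mirror: $\overline{\mathbf f}(j)=\mathbf f(n+1-j)$, $\overline\pi=\{\{n+1-j:j\in\beta\}:\beta\in\pi\}$. Admissible weights: $\alpha=(\alpha_\pi)\subset\mathbb C$ with (i) $\alpha_{1_{\mathbf f}}=1$; (ii) $\alpha_{\{\{1\},\{2\}\}}=1$ for $\mathbf f\in\mathcal F^2$; (iii) $\alpha_\pi=\alpha_{\pi_{\mathrm{red}}}$; (iv) if $\pi\in\mathcal P(\mathbf f)$ has blocks $\beta_1\ne\beta_2$, $j\in\beta_1$, $j+1\in\beta_2$, $\mathbf f(j)=\mathbf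 f(j+1)$, then $\alpha_\pi=\alpha_{\pi_{\beta_1\smile\beta_2}}\alpha_{\{\beta_1,\beta_2\}}$; (v) $\alpha_\pi=\alpha_\sigma$ if $\pi\in\mathcal P(\mathbf f)$, $\sigma\in\mathcal P(\mathbf g)$ have the same set partition and $\mathbf f(\ell)=\mathbf g(\ell)$ for $1<\ell<n$; (vi) $\alpha_{\overline\pi}=\overline{\alpha_\pi}$. An algebraic probability space is a pair $(\mathcal A,\Phi)$ of a complex algebra and a linear functional. For a family $\mathbf a=(a^{\mathsf Q}_\ell:\mathsf Q\in\mathcal F,\ell\in I^{\mathsf Q})\subset\mathcal A$ let $j_{\mathbf a}$ be the homomorphism from the non-unital noncommutative polynomial algebra $\mathbb C\langle x^{\mathsf Q}_\ell\rangle$ to $\mathcal A$ with $x^{\mathsf Q}_\ell\mapsto a^{\mathsf Q}_\ell$; moments are $m_{\mathbf a}(Y)=\Phi(j_{\mathbf a}(Y))$. For a monomial $Y=x^{\mathbf g(1)}_{\ell_1}\cdots x^{\mathbf g(m)}_{\ell_m}$ and $\beta=\{r_1<\dots<r_p\}\subset[m]$, $Y|_\beta=x^{\mathbf g(r_1)}_{\ell_{r_1}}\cdots x^{\mathbf g(r_p)}_{\ell_{r_p}}$. The $\alpha$-cumulants $c_{\mathbf a}$ are the unique values on monomials with $m_{\mathbf a}(Y)=\sum_{\pi\in\mathcal P(\mathbf g)}\alpha_\pi\prod_{\beta\in\pi}c_{\mathbf a}(Y|_\beta)$ for all monomials $Y$ (here $\mathbf g$ is the face word of $Y$). *)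

theory Defs
  imports Complex_Main "HOL-Library.Disjoint_Sets"
begin

text \<open>A face word f in F^n is a list of length n over the (finite) face
type 'q. Positions are 0-based: a partition in P(f) is a set partition of {0..<length f},
so position p corresponds to the element p+1 of [n] in the paper.\<close>

definition Pf :: "'q list \<Rightarrow> nat set set set" where
  "Pf f = {\<pi>. partition_on {0..<length f} \<pi>}"

definition rank :: "nat set \<Rightarrow> nat \<Rightarrow> nat" where
  "rank S x = card {y \<in> S. y < x}"

text \<open>A partition of a subset S is identified with a partition of {0..<card S}.\<close>
definition relabel :: "nat set \<Rightarrow> nat set set \<Rightarrow> nat set set" where
  "relabel S \<pi> = (\<lambda>\<beta>. rank S ` \<beta>) ` \<pi>"

definition merge_blocks :: "nat set set \<Rightarrow> nat set \<Rightarrow> nat set \<Rightarrow> nat set set" where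
  "merge_blocks \<pi> \<beta>1 \<beta>2 = insert (\<beta>1 \<union> \<beta>2) (\<pi> - {\<beta>1, \<beta>2})"

definition red_eq :: "'q list \<Rightarrow> nat set set \<Rightarrow> nat \<Rightarrow> nat \<Rightarrow> bool" where
  "red_eq f \<pi> s t \<longleftrightarrow> s < length f \<and> t < length f \<and>
     (\<forall>r \<in> {min s t..max s t}. f ! r = f ! s \<and> (\<exists>\<beta>\<in>\<pi>. r \<in> \<beta> \<and> s \<in> \<beta>))"

text \<open>Representatives (least elements) of the equivalence classes; the quotient is
ordered and faced via these representatives.\<close>
definition red_reps :: "'q list \<Rightarrow> nat set set \<Rightarrow> nat set" where
  "red_reps f \<pi> = {j. j < length f \<and> \<not> (\<exists>s<j. red_eq f \<pi> s j)}"

definition red_faces :: "'q list \<Rightarrow> nat set set \<Rightarrow> 'q list" where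
  "red_faces f \<pi> = nths f (red_reps f \<pi>)"

definition red_part :: "'q list \<Rightarrow> nat set set \<Rightarrow> nat set set" where
  "red_part f \<pi> = (\<lambda>\<beta>. (\<lambda>j. rank (red_reps f \<pi>) (Min {s. red_eq f \<pi> s j})) ` \<beta>) ` \<pi>"

definition mirror :: "nat \<Rightarrow> nat set set \<Rightarrow> nat set set" where
  "mirror n \<pi> = (\<lambda>\<beta>. (\<lambda>j. n - 1 - j) ` \<beta>) ` \<pi>"

definition admissible :: "('q::finite list \<Rightarrow> nat set set \<Rightarrow> complex) \<Rightarrow> bool" where
  "admissible \<alpha> \<longleftrightarrow>
     (\<forall>f. f \<noteq> [] \<longrightarrow> \<alpha> f {{0..<length f}} = 1) \<and>
     (\<forall>f. length f = 2 \<longrightarrow> \<alpha> f {{0}, {1}} = 1) \<and>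
     (\<forall>f \<pi>. f \<noteq> [] \<and> \<pi> \<in> Pf f \<longrightarrow> \<alpha> f \<pi> = \<alpha> (red_faces f \<pi>) (red_part f \<pi>)) \<and>
     (\<forall>f \<pi> \<beta>1 \<beta>2 j. f \<noteq> [] \<and> \<pi> \<in> Pf f \<and> \<beta>1 \<in> \<pi> \<and> \<beta>2 \<in> \<pi> \<and> \<beta>1 \<noteq> \<beta>2 \<and>
         j \<in> \<beta>1 \<and> Suc j \<in> \<beta>2 \<and> f ! j = f ! Suc j \<longrightarrow>
         \<alpha> f \<pi> = \<alpha> f (merge_blocks \<pi> \<beta>1 \<beta>2) *
                 \<alpha> (nths f (\<beta>1 \<union> \<beta>2)) (relabel (\<beta>1 \<union> \<beta>2) {\<beta>1, \<beta>2})) \<and>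
     (\<forall>f g \<pi>. f \<noteq> [] \<and> length g = length f \<and> \<pi> \<in> Pf f \<and>
         (\<forall>l. 0 < l \<and> l < length f - 1 \<longrightarrow> f ! l = g ! l) \<longrightarrow> \<alpha> f \<pi> = \<alpha> g \<pi>) \<and>
     (\<forall>f \<pi>. f \<noteq> [] \<and> \<pi> \<in> Pf f \<longrightarrow> \<alpha> (rev f) (mirror (length f) \<pi>) = cnj (\<alpha> f \<pi>))"

fun mprod :: "'a::semigroup_mult list \<Rightarrow> 'a" where
  "mprod [x] = x"
| "mprod (x # y # zs) = x * mprod (y # zs)"

text \<open>Monomials in the variables x^Q_l (Q a face, l in I Q) are nonempty words of
pairs (Q, l).\<close>
definition is_monomial :: "('q \<Rightarrow> 'i set) \<Rightarrow> ('q \<times> 'i) list \<Rightarrow> bool" where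
  "is_monomial I Y \<longleftrightarrow> Y \<noteq> [] \<and> (\<forall>(Q, l) \<in> set Y. l \<in> I Q)"

definition moment :: "('a::ring \<Rightarrow> complex) \<Rightarrow> ('q \<Rightarrow> 'i \<Rightarrow> 'a) \<Rightarrow> ('q \<times> 'i) list \<Rightarrow> complex" where
  "moment \<Phi> a Y = \<Phi> (mprod (map (\<lambda>(Q, l). a Q l) Y))"

definition is_cumulant ::
  "('q::finite list \<Rightarrow> nat set set \<Rightarrow> complex) \<Rightarrow> ('a::ring \<Rightarrow> complex) \<Rightarrow>
   ('q \<Rightarrow> 'i \<Rightarrow> 'a) \<Rightarrow> ('q \<Rightarrow> 'i set) \<Rightarrow> (('q \<times> 'i) list \<Rightarrow> complex) \<Rightarrow> bool" where
  "is_cumulant \<alpha> \<Phi> a I c \<longleftrightarrow>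
     (\<forall>Y. is_monomial I Y \<longrightarrow>
        moment \<Phi> a Y = (\<Sum>\<pi> \<in> Pf (map fst Y). \<alpha> (map fst Y) \<pi> * (\<Prod>\<beta>\<in>\<pi>. c (nths Y \<beta>))))"

text \<open>The alpha-cumulant of a monomial: the unique value of any cumulant function.\<close>
definition cumulant ::
  "('q::finite list \<Rightarrow> nat set set \<Rightarrow> complex) \<Rightarrow> ('a::ring \<Rightarrow> complex) \<Rightarrow>
   ('q \<Rightarrow> 'i \<Rightarrow> 'a) \<Rightarrow> ('q \<Rightarrow> 'i set) \<Rightarrow> ('q \<times> 'i) list \<Rightarrow> complex" where
  "cumulant \<alpha> \<Phi> a I Y = (THE v. \<exists>c. is_cumulant \<alpha> \<Phi> a I c \<and> c Y = v)"

end

theory Submission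
  imports Defs
begin

text \<open>Cumulants only depend on the evaluated letters, so we work with words of pairs
(face, algebra element), on which the cumulant is defined by solving the moment-cumulant
formula for its one-block term. Let \<open>w = u x y v\<close> with \<open>x\<close>, \<open>y\<close> of the same face and
\<open>w' = u (x y) v\<close>; both words have the same moment. Partitions of \<open>w'\<close> correspond to the
partitions of \<open>w\<close> in which \<open>x\<close> and \<open>y\<close> share a block, with the same weight by reduction
invariance (iii). The partitions of \<open>w\<close> separating \<open>x\<close> from \<open>y\<close> arise from these by splitting
that block into \<open>\<beta>\<^sub>1 \<ni> x\<close> and \<open>\<beta>\<^sub>2 \<ni> y\<close>, and their weight factorises by (iv). Comparing
the two moment expansions, all terms but the one-block term agree by induction on the
length, and the one-block terms give
\<open>c(w') = c(w) + \<Sum> \<alpha>\<^bsub>{\<beta>\<^sub>1,\<beta>\<^sub>2}\<^esub> c(w|\<beta>\<^sub>1) c(w|\<beta>\<^sub>2)\<close>.\<close>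

lemma finite_Pf: "finite (Pf F)"
  unfolding Pf_def by (rule finitely_many_partition_on) simp

lemma finite_Pf_partition: "\<pi> \<in> Pf F \<Longrightarrow> finite \<pi>"
  unfolding Pf_def by (auto intro: finite_elements[of "{0..<length F}"])

lemma Pf_blockD:
  assumes "\<pi> \<in> Pf F" "\<beta> \<in> \<pi>"
  shows "\<beta> \<subseteq> {0..<length F}" "\<beta> \<noteq> {}" "finite \<beta>"
  using assms unfolding Pf_def partition_on_def by (auto intro: finite_subset)

lemma Pf_disjoint: "\<pi> \<in> Pf F \<Longrightarrow> \<beta> \<in> \<pi> \<Longrightarrow> \<gamma> \<in> \<pi> \<Longrightarrow> j \<in> \<beta> \<Longrightarrow> j \<in> \<gamma> \<Longrightarrow> \<beta> = \<gamma>"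
  unfolding Pf_def partition_on_def pairwise_def disjnt_def by blast

lemma Pf_covers: "\<pi> \<in> Pf F \<Longrightarrow> j < length F \<Longrightarrow> \<exists>\<beta>\<in>\<pi>. j \<in> \<beta>"
  unfolding Pf_def partition_on_def by auto

lemma one_block_Pf: "F \<noteq> [] \<Longrightarrow> {{0..<length F}} \<in> Pf F"
  unfolding Pf_def by (auto intro: partition_on_space)

lemma card_block_less:
  assumes \<pi>: "\<pi> \<in> Pf F" and \<beta>: "\<beta> \<in> \<pi>" and not_one: "\<pi> \<noteq> {{0..<length F}}"
  shows "card \<beta> < length F"
proof -
  have "\<beta> \<noteq> {0..<length F}"
  proof
    assume full: "\<beta> = {0..<length F}"
    have "\<gamma> = \<beta>" if "\<gamma> \<in> \<pi>" for \<gamma>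
      using Pf_blockD[OF \<pi> that] Pf_disjoint[OF \<pi> that \<beta>] full by blast
    then show False using \<beta> not_one full by blast
  qed
  with Pf_blockD(1)[OF \<pi> \<beta>] show ?thesis
    by (metis card_atLeastLessThan diff_zero finite_atLeastLessThan psubsetI psubset_card_mono)
qed

lemma length_nths_subset: "\<beta> \<subseteq> {0..<length w} \<Longrightarrow> length (nths w \<beta>) = card \<beta>"
  unfolding length_nths by (rule arg_cong[where f = card]) auto

lemma nths_block_shorter:
  assumes "\<pi> \<in> Pf (map fst w)" "\<pi> \<noteq> {{0..<length w}}" "\<beta> \<in> \<pi>"
  shows "length (nths w \<beta>) < length w"
  using assms Pf_blockD(1)[of \<pi> "map fst w" \<beta>] card_block_less[of \<pi> "map fst w" \<beta>]
  by (simp add: length_nths_subset)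

lemma admissible_one_block:
  assumes "admissible \<alpha>" "F \<noteq> []"
  shows "\<alpha> F {{0..<length F}} = 1"
proof -
  have "\<forall>f. f \<noteq> [] \<longrightarrow> \<alpha> f {{0..<length f}} = 1"
    using assms(1) unfolding admissible_def by (elim conjE) assumption
  with assms(2) show ?thesis by blast
qed

lemma admissible_reduction:
  assumes "admissible \<alpha>" "F \<noteq> []" "\<pi> \<in> Pf F"
  shows "\<alpha> F \<pi> = \<alpha> (red_faces F \<pi>) (red_part F \<pi>)"
proof -
  have "\<forall>f \<pi>. f \<noteq> [] \<and> \<pi> \<in> Pf f \<longrightarrow> \<alpha> f \<pi> = \<alpha> (red_faces f \<pi>) (red_part f \<pi>)"
    using assms(1) unfolding admissible_def by (elim conjE) assumption
  with assms(2,3) show ?thesis by blast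
qed

lemma admissible_merge:
  assumes "admissible \<alpha>" "F \<noteq> []" "\<pi> \<in> Pf F" "\<beta>1 \<in> \<pi>" "\<beta>2 \<in> \<pi>" "\<beta>1 \<noteq> \<beta>2"
    "j \<in> \<beta>1" "Suc j \<in> \<beta>2" "F ! j = F ! Suc j"
  shows "\<alpha> F \<pi> = \<alpha> F (merge_blocks \<pi> \<beta>1 \<beta>2) * \<alpha> (nths F (\<beta>1 \<union> \<beta>2)) (relabel (\<beta>1 \<union> \<beta>2) {\<beta>1, \<beta>2})"
proof -
  have "\<forall>f \<pi> \<beta>1 \<beta>2 j. f \<noteq> [] \<and> \<pi> \<in> Pf f \<and> \<beta>1 \<in> \<pi> \<and> \<beta>2 \<in> \<pi> \<and> \<beta>1 \<noteq> \<beta>2 \<and>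
      j \<in> \<beta>1 \<and> Suc j \<in> \<beta>2 \<and> f ! j = f ! Suc j \<longrightarrow>
      \<alpha> f \<pi> = \<alpha> f (merge_blocks \<pi> \<beta>1 \<beta>2) * \<alpha> (nths f (\<beta>1 \<union> \<beta>2)) (relabel (\<beta>1 \<union> \<beta>2) {\<beta>1, \<beta>2})"
    using assms(1) unfolding admissible_def by (elim conjE) assumption
  with assms(2-) show ?thesis by blast
qed

section \<open>Moments and cumulants of evaluated words\<close>

lemma mprod_Cons: "xs \<noteq> [] \<Longrightarrow> mprod (x # xs) = x * mprod xs"
  by (cases xs) auto

lemma mprod_merge: "mprod (xs @ [a * b] @ ys) = mprod (xs @ [a, b] @ ys)"
proof (induction xs)
  case Nil
  then show ?case by (cases ys) (auto simp: mult.assoc)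
qed (simp add: mprod_Cons)

context
  fixes \<alpha> :: "'q::finite list \<Rightarrow> nat set set \<Rightarrow> complex" and \<Phi> :: "'a::ring \<Rightarrow> complex"
begin

definition word_moment :: "('q \<times> 'a) list \<Rightarrow> complex" where
  "word_moment w = \<Phi> (mprod (map snd w))"

function word_cumulant :: "('q \<times> 'a) list \<Rightarrow> complex" where
  "word_cumulant w = word_moment w -
     (\<Sum>\<pi> \<in> Pf (map fst w) - {{{0..<length w}}}.
        \<alpha> (map fst w) \<pi> * (\<Prod>\<beta>\<in>\<pi>. word_cumulant (nths w \<beta>)))"
  by auto
termination
  by (relation "measure length") (auto intro: nths_block_shorter)

declare word_cumulant.simps [simp del]

lemma word_moment_expansion:
  assumes "admissible \<alpha>" "w \<noteq> []"
  shows "word_moment w =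
    (\<Sum>\<pi> \<in> Pf (map fst w). \<alpha> (map fst w) \<pi> * (\<Prod>\<beta>\<in>\<pi>. word_cumulant (nths w \<beta>)))"
proof -
  let ?F = "map fst w" and ?one = "{{0..<length w}}"
  have one: "?one \<in> Pf ?F" and "\<alpha> ?F ?one = 1"
    using assms one_block_Pf[of ?F] admissible_one_block[of \<alpha> ?F] by simp_all
  then have "(\<Sum>\<pi> \<in> Pf ?F. \<alpha> ?F \<pi> * (\<Prod>\<beta>\<in>\<pi>. word_cumulant (nths w \<beta>))) =
      word_cumulant w + (\<Sum>\<pi> \<in> Pf ?F - {?one}. \<alpha> ?F \<pi> * (\<Prod>\<beta>\<in>\<pi>. word_cumulant (nths w \<beta>)))"
    by (simp add: sum.remove[OF finite_Pf one] nths_all)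
  then show ?thesis
    by (simp add: word_cumulant.simps[of w])
qed

end

section \<open>Cumulants of monomials\<close>

definition eval_monomial :: "('q \<Rightarrow> 'i \<Rightarrow> 'a) \<Rightarrow> ('q \<times> 'i) list \<Rightarrow> ('q \<times> 'a) list" where
  "eval_monomial a Y = map (\<lambda>(Q, l). (Q, a Q l)) Y"

lemma eval_monomial_nths: "eval_monomial a (nths Y \<beta>) = nths (eval_monomial a Y) \<beta>"
  by (simp add: eval_monomial_def nths_map)

lemma map_fst_eval_monomial: "map fst (eval_monomial a Y) = map fst Y"
  by (induction Y) (auto simp: eval_monomial_def)

lemma moment_eq_word_moment: "moment \<Phi> a Y = word_moment \<Phi> (eval_monomial a Y)"
  unfolding moment_def word_moment_def eval_monomial_def by (simp add: comp_def case_prod_unfold)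

lemma is_monomial_nths:
  assumes "is_monomial I Y" "\<pi> \<in> Pf (map fst Y)" "\<beta> \<in> \<pi>"
  shows "is_monomial I (nths Y \<beta>)"
proof -
  have "nths Y \<beta> \<noteq> []"
    using Pf_blockD[OF assms(2,3)] length_nths_subset[of \<beta> Y] by auto
  then show ?thesis
    using assms(1) set_nths_subset[of Y \<beta>] unfolding is_monomial_def by auto
qed

lemma is_cumulant_word_cumulant:
  assumes "admissible \<alpha>"
  shows "is_cumulant \<alpha> \<Phi> a I (\<lambda>Y. word_cumulant \<alpha> \<Phi> (eval_monomial a Y))"
  unfolding is_cumulant_def
proof (intro allI impI)
  fix Y assume "is_monomial I Y"
  then have "eval_monomial a Y \<noteq> []" by (auto simp: is_monomial_def eval_monomial_def)
  then show "moment \<Phi> a Y = (\<Sum>\<pi>\<in>Pf (map fst Y). \<alpha> (map fst Y) \<pi> *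
      (\<Prod>\<beta>\<in>\<pi>. word_cumulant \<alpha> \<Phi> (eval_monomial a (nths Y \<beta>))))"
    using word_moment_expansion[OF assms, of "eval_monomial a Y" \<Phi>]
    by (simp add: moment_eq_word_moment map_fst_eval_monomial eval_monomial_nths)
qed

lemma is_cumulant_split_top:
  assumes "admissible \<alpha>" "is_cumulant \<alpha> \<Phi> a I c" "is_monomial I Y"
  shows "moment \<Phi> a Y = c Y +
    (\<Sum>\<pi> \<in> Pf (map fst Y) - {{{0..<length Y}}}. \<alpha> (map fst Y) \<pi> * (\<Prod>\<beta>\<in>\<pi>. c (nths Y \<beta>)))"
proof -
  let ?F = "map fst Y" and ?one = "{{0..<length Y}}"
  have "Y \<noteq> []" using assms(3) by (simp add: is_monomial_def)
  then have one: "?one \<in> Pf ?F" and "\<alpha> ?F ?one = 1"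
    using assms(1) one_block_Pf[of ?F] admissible_one_block[of \<alpha> ?F] by simp_all
  then show ?thesis
    using assms(2,3) unfolding is_cumulant_def by (simp add: sum.remove[OF finite_Pf one] nths_all)
qed

lemma is_cumulant_unique:
  assumes adm: "admissible \<alpha>" and c: "is_cumulant \<alpha> \<Phi> a I c" and d: "is_cumulant \<alpha> \<Phi> a I d"
  shows "is_monomial I Y \<Longrightarrow> c Y = d Y"
proof (induction "length Y" arbitrary: Y rule: less_induct)
  case less
  let ?F = "map fst Y" and ?one = "{{0..<length Y}}"
  have "(\<Sum>\<pi> \<in> Pf ?F - {?one}. \<alpha> ?F \<pi> * (\<Prod>\<beta>\<in>\<pi>. c (nths Y \<beta>))) =
        (\<Sum>\<pi> \<in> Pf ?F - {?one}. \<alpha> ?F \<pi> * (\<Prod>\<beta>\<in>\<pi>. d (nths Y \<beta>)))"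
  proof (intro sum.cong refl arg_cong2[where f = "(*)"] prod.cong)
    fix \<pi> \<beta> assume \<pi>: "\<pi> \<in> Pf ?F - {?one}" and \<beta>: "\<beta> \<in> \<pi>"
    then show "c (nths Y \<beta>) = d (nths Y \<beta>)"
      using less nths_block_shorter[of \<pi> Y \<beta>] is_monomial_nths[OF less.prems, of \<pi> \<beta>] by auto
  qed
  then show ?case
    using is_cumulant_split_top[OF adm c less.prems] is_cumulant_split_top[OF adm d less.prems]
    by simp
qed

lemma cumulant_eq_word_cumulant:
  assumes "admissible \<alpha>" "is_monomial I Y"
  shows "cumulant \<alpha> \<Phi> a I Y = word_cumulant \<alpha> \<Phi> (eval_monomial a Y)"
  unfolding cumulant_def
  using is_cumulant_word_cumulant[OF assms(1)] is_cumulant_unique[OF assms(1) _ _ assms(2)]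
  by (intro the_equality) blast+

section \<open>Splitting a block in two\<close>

lemma rank_less_rank: "finite B \<Longrightarrow> x \<in> B \<Longrightarrow> y \<in> B \<Longrightarrow> x < y \<Longrightarrow> rank B x < rank B y"
  unfolding rank_def by (intro psubset_card_mono) auto

lemma bij_betw_rank:
  assumes "finite B"
  shows "bij_betw (rank B) B {0..<card B}"
proof -
  have inj: "inj_on (rank B) B"
    using rank_less_rank[OF assms] by (metis inj_onI less_irrefl linorder_neqE_nat)
  have "rank B ` B \<subseteq> {0..<card B}"
    using assms unfolding rank_def by (auto intro!: psubset_card_mono)
  moreover have "card (rank B ` B) = card {0..<card B}"
    using card_image[OF inj] by simp
  ultimately show ?thesis
    using inj by (simp add: bij_betw_def card_subset_eq)
qed

lemma rank_Suc:
  assumes "finite B" "p \<in> B"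
  shows "rank B (Suc p) = Suc (rank B p)"
proof -
  have "{z \<in> B. z < Suc p} = insert p {z \<in> B. z < p}" using assms(2) by auto
  then show ?thesis unfolding rank_def using assms(1) by simp
qed

lemma rank_upt_image:
  assumes "\<delta> \<subseteq> {0..<m}"
  shows "rank {0..<m} ` \<delta> = \<delta>"
proof -
  have "{y \<in> {0..<m}. y < x} = {0..<x}" if "x \<in> \<delta>" for x
    using that assms by auto
  then have "rank {0..<m} x = x" if "x \<in> \<delta>" for x
    using that unfolding rank_def by simp
  then show ?thesis by simp
qed

lemma relabel_upt: "\<beta> \<subseteq> {0..<m} \<Longrightarrow> \<gamma> \<subseteq> {0..<m} \<Longrightarrow> relabel {0..<m} {\<beta>, \<gamma>} = {\<beta>, \<gamma>}"
  unfolding relabel_def by (simp add: rank_upt_image)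

lemma nths_nths_rank:
  assumes "finite B" "\<beta> \<subseteq> B"
  shows "nths (nths w B) (rank B ` \<beta>) = nths w \<beta>"
proof -
  have "inj_on (rank B) B" using bij_betw_rank[OF assms(1)] by (simp add: bij_betw_def)
  then have "{i \<in> B. rank B i \<in> rank B ` \<beta>} = \<beta>"
    using assms(2) by (auto dest: inj_onD)
  then show ?thesis by (simp add: nths_nths flip: rank_def)
qed

definition splits :: "nat set \<Rightarrow> nat \<Rightarrow> (nat set \<times> nat set) set" where
  "splits S p = {(\<beta>1, \<beta>2). \<beta>1 \<union> \<beta>2 = S \<and> \<beta>1 \<inter> \<beta>2 = {} \<and> p \<in> \<beta>1 \<and> Suc p \<in> \<beta>2}"

lemma finite_splits: "finite S \<Longrightarrow> finite (splits S p)"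
  by (rule finite_subset[of _ "Pow S \<times> Pow S"]) (auto simp: splits_def)

lemma image_splits:
  assumes h: "bij_betw h B C" and p: "p \<in> B" "Suc p \<in> B" and h_Suc: "h (Suc p) = Suc (h p)"
  shows "(\<lambda>(\<beta>1, \<beta>2). (h ` \<beta>1, h ` \<beta>2)) ` splits B p = splits C (h p)"
proof (intro equalityI subsetI)
  have inj: "inj_on h B" and img: "h ` B = C" using h by (auto simp: bij_betw_def)
  fix s assume "s \<in> (\<lambda>(\<beta>1, \<beta>2). (h ` \<beta>1, h ` \<beta>2)) ` splits B p"
  then obtain \<beta>1 \<beta>2 where s: "s = (h ` \<beta>1, h ` \<beta>2)" and sp: "(\<beta>1, \<beta>2) \<in> splits B p"
    by auto
  then have "\<beta>1 \<subseteq> B" "\<beta>2 \<subseteq> B" by (auto simp: splits_def)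
  then have "h ` \<beta>1 \<inter> h ` \<beta>2 = h ` (\<beta>1 \<inter> \<beta>2)" by (simp add: inj_on_image_Int[OF inj])
  then show "s \<in> splits C (h p)"
    using sp img unfolding s splits_def by (auto simp flip: image_Un h_Suc)
next
  have img: "h ` B = C" using h by (auto simp: bij_betw_def)
  fix s assume s: "s \<in> splits C (h p)"
  obtain \<gamma>1 \<gamma>2 where s_eq: "s = (\<gamma>1, \<gamma>2)" by fastforce
  have U: "\<gamma>1 \<union> \<gamma>2 = h ` B" and D: "\<gamma>1 \<inter> \<gamma>2 = {}" and "h p \<in> \<gamma>1" "h (Suc p) \<in> \<gamma>2"
    using s img h_Suc unfolding s_eq splits_def by auto
  let ?\<beta>1 = "B \<inter> h -` \<gamma>1" and ?\<beta>2 = "B \<inter> h -` \<gamma>2"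
  have "?\<beta>1 \<union> ?\<beta>2 = B \<inter> h -` (\<gamma>1 \<union> \<gamma>2)" by auto
  also have "\<dots> = B" unfolding U by auto
  moreover have "?\<beta>1 \<inter> ?\<beta>2 = {}" using D by auto
  ultimately have "(?\<beta>1, ?\<beta>2) \<in> splits B p"
    using p \<open>h p \<in> \<gamma>1\<close> \<open>h (Suc p) \<in> \<gamma>2\<close> unfolding splits_def by simp
  moreover have "h ` (B \<inter> h -` \<gamma>) = h ` B \<inter> \<gamma>" for \<gamma> by blast
  then have "h ` ?\<beta>1 = \<gamma>1" "h ` ?\<beta>2 = \<gamma>2"
    by (auto simp: U[symmetric])
  ultimately show "s \<in> (\<lambda>(\<beta>1, \<beta>2). (h ` \<beta>1, h ` \<beta>2)) ` splits B p"
    unfolding s_eq by (intro image_eqI[where x = "(?\<beta>1, ?\<beta>2)"]) simp_all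
qed

lemma bij_betw_splits:
  assumes h: "bij_betw h B C" and p: "p \<in> B" "Suc p \<in> B" and h_Suc: "h (Suc p) = Suc (h p)"
  shows "bij_betw (\<lambda>(\<beta>1, \<beta>2). (h ` \<beta>1, h ` \<beta>2)) (splits B p) (splits C (h p))"
proof (rule bij_betw_imageI)
  have inj: "inj_on h B" using h by (simp add: bij_betw_def)
  show "inj_on (\<lambda>(\<beta>1, \<beta>2). (h ` \<beta>1, h ` \<beta>2)) (splits B p)"
  proof (rule inj_onI)
    fix s t assume "s \<in> splits B p" "t \<in> splits B p"
      and eq: "(\<lambda>(\<beta>1, \<beta>2). (h ` \<beta>1, h ` \<beta>2)) s = (\<lambda>(\<beta>1, \<beta>2). (h ` \<beta>1, h ` \<beta>2)) t"
    then have "fst s \<subseteq> B" "snd s \<subseteq> B" "fst t \<subseteq> B" "snd t \<subseteq> B"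
      unfolding splits_def by auto
    with eq show "s = t"
      by (simp add: case_prod_beta inj_on_image_eq_iff[OF inj] prod_eq_iff)
  qed
  show "(\<lambda>(\<beta>1, \<beta>2). (h ` \<beta>1, h ` \<beta>2)) ` splits B p = splits C (h p)"
    by (rule image_splits[OF assms])
qed

context
  fixes \<alpha> :: "'q::finite list \<Rightarrow> nat set set \<Rightarrow> complex" and \<Phi> :: "'a::ring \<Rightarrow> complex"
begin

definition split_sum :: "('q \<times> 'a) list \<Rightarrow> nat set \<Rightarrow> nat \<Rightarrow> complex" where
  "split_sum w S p = (\<Sum>(\<beta>1, \<beta>2) \<in> splits S p. \<alpha> (nths (map fst w) S) (relabel S {\<beta>1, \<beta>2}) *
      word_cumulant \<alpha> \<Phi> (nths w \<beta>1) * word_cumulant \<alpha> \<Phi> (nths w \<beta>2))"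

lemma split_sum_nths:
  assumes B: "B \<subseteq> {0..<length w}" and p: "p \<in> B" "Suc p \<in> B"
  shows "split_sum (nths w B) {0..<card B} (rank B p) = split_sum w B p"
proof -
  have fin: "finite B" using B finite_subset by blast
  have faces: "nths (map fst (nths w B)) {0..<card B} = nths (map fst w) B"
    using length_nths_subset[OF B] by (simp add: nths_all nths_map)
  let ?h = "\<lambda>(\<beta>1, \<beta>2). (rank B ` \<beta>1, rank B ` \<beta>2)"
  let ?G = "\<lambda>(\<gamma>1, \<gamma>2). \<alpha> (nths (map fst (nths w B)) {0..<card B}) (relabel {0..<card B} {\<gamma>1, \<gamma>2}) *
        word_cumulant \<alpha> \<Phi> (nths (nths w B) \<gamma>1) * word_cumulant \<alpha> \<Phi> (nths (nths w B) \<gamma>2)"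
  have "split_sum (nths w B) {0..<card B} (rank B p) = (\<Sum>s \<in> splits B p. ?G (?h s))"
    unfolding split_sum_def
    by (rule sum.reindex_bij_betw[symmetric,
          OF bij_betw_splits[OF bij_betw_rank[OF fin] p rank_Suc[OF fin p(1)]]])
  also have "\<dots> = split_sum w B p"
    unfolding split_sum_def
  proof (rule sum.cong[OF refl])
    fix s assume s: "s \<in> splits B p"
    obtain \<beta>1 \<beta>2 where s_eq: "s = (\<beta>1, \<beta>2)" by fastforce
    have sub: "\<beta>1 \<subseteq> B" "\<beta>2 \<subseteq> B" using s by (auto simp: s_eq splits_def)
    then have "rank B ` \<beta>1 \<subseteq> {0..<card B}" "rank B ` \<beta>2 \<subseteq> {0..<card B}"
      using bij_betw_rank[OF fin] by (auto simp: bij_betw_def)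
    then show "?G (?h s) = (case s of (\<beta>1, \<beta>2) \<Rightarrow> \<alpha> (nths (map fst w) B) (relabel B {\<beta>1, \<beta>2}) *
        word_cumulant \<alpha> \<Phi> (nths w \<beta>1) * word_cumulant \<alpha> \<Phi> (nths w \<beta>2))"
      using sub by (simp add: s_eq faces relabel_upt nths_nths_rank[OF fin] relabel_def[of B])
  qed
  finally show ?thesis .
qed

end

section \<open>Identifying two adjacent positions\<close>

text \<open>\<open>collapse (length u)\<close> maps the positions of \<open>u @ [x, y] @ v\<close> onto those of
\<open>u @ [z] @ v\<close>, sending both \<open>x\<close> and \<open>y\<close> to \<open>z\<close>.\<close>

definition collapse :: "nat \<Rightarrow> nat \<Rightarrow> nat" where
  "collapse p j = (if j \<le> p then j else j - 1)"

definition uncollapse :: "nat \<Rightarrow> nat \<Rightarrow> nat" where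
  "uncollapse p r = (if r \<le> p then r else Suc r)"

lemma collapse_uncollapse [simp]: "collapse p (uncollapse p r) = r"
  by (simp add: collapse_def uncollapse_def)

lemma surj_collapse: "surj (collapse p)"
  by (metis collapse_uncollapse surjI)

lemma collapse_mono: "a \<le> b \<Longrightarrow> collapse p a \<le> collapse p b"
  unfolding collapse_def by auto

lemma collapse_eq_collapse: "collapse p a = collapse p b \<Longrightarrow> a \<noteq> b \<Longrightarrow> {a, b} = {p, Suc p}"
  by (auto simp: collapse_def split: if_splits)

lemma collapse_min: "collapse p (min s t) = min (collapse p s) (collapse p t)"
  unfolding collapse_def min_def by auto

lemma collapse_max: "collapse p (max s t) = max (collapse p s) (collapse p t)"
  unfolding collapse_def max_def by auto

lemma uncollapse_le: "m \<le> collapse p s \<Longrightarrow> uncollapse p m \<le> s"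
  by (auto simp: uncollapse_def collapse_def split: if_splits)

lemma collapse_less: "y < uncollapse p m \<Longrightarrow> y \<noteq> Suc p \<Longrightarrow> collapse p y < m"
  by (auto simp: uncollapse_def collapse_def split: if_splits)

lemma uncollapse_less_iff: "uncollapse p a < uncollapse p b \<longleftrightarrow> a < b"
  by (auto simp: uncollapse_def)

lemma collapse_atLeastAtMost: "a \<le> b \<Longrightarrow> collapse p ` {a..b} = {collapse p a..collapse p b}"
proof (intro equalityI subsetI)
  fix r assume "a \<le> b" "r \<in> {collapse p a..collapse p b}"
  then have "max a (uncollapse p r) \<in> {a..b}" "collapse p (max a (uncollapse p r)) = r"
    by (auto simp: collapse_def uncollapse_def split: if_splits)
  then show "r \<in> collapse p ` {a..b}" by (metis image_eqI)
qed (auto intro: collapse_mono)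

lemma collapse_atLeastLessThan: "p < m \<Longrightarrow> collapse p ` {0..<Suc m} = {0..<m}"
proof -
  assume "p < m"
  then have "collapse p ` {0..m} = {0..<m}"
    by (subst collapse_atLeastAtMost) (auto simp: collapse_def)
  then show ?thesis by (simp add: atLeastLessThanSuc_atLeastAtMost)
qed

lemma collapse_mem_image_less: "j < p \<Longrightarrow> j \<in> collapse p ` \<beta> \<longleftrightarrow> j \<in> \<beta>"
proof -
  assume "j < p"
  then have "j = collapse p b \<longleftrightarrow> b = j" for b by (auto simp: collapse_def)
  then show ?thesis by (simp add: image_iff)
qed

lemma collapse_mem_image_self: "p \<in> collapse p ` \<beta> \<longleftrightarrow> p \<in> \<beta> \<or> Suc p \<in> \<beta>"
proof -
  have "p = collapse p b \<longleftrightarrow> b = p \<or> b = Suc p" for b by (auto simp: collapse_def)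
  then show ?thesis by (auto simp: image_iff)
qed

lemma collapse_mem_image_greater: "j + Suc p \<in> collapse p ` \<beta> \<longleftrightarrow> j + Suc (Suc p) \<in> \<beta>"
proof -
  have "j + Suc p = collapse p b \<longleftrightarrow> b = j + Suc (Suc p)" for b by (auto simp: collapse_def)
  then show ?thesis by (simp add: image_iff)
qed

lemma nths_cong_less: "(\<And>j. j < length xs \<Longrightarrow> j \<in> A \<longleftrightarrow> j \<in> B) \<Longrightarrow> nths xs A = nths xs B"
  unfolding nths_def by (rule arg_cong[where f = "map fst"], rule filter_cong) (auto simp: set_zip)

lemma nths_append_single: "nths (u @ [z] @ v) A =
   nths u A @ (if length u \<in> A then [z] else []) @ nths v {j. j + Suc (length u) \<in> A}"
  by (simp add: nths_append nths_Cons)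

lemma nths_append_pair: "nths (u @ [x, y] @ v) A =
   nths u A @ (if length u \<in> A then [x] else []) @ (if Suc (length u) \<in> A then [y] else []) @
   nths v {j. j + Suc (Suc (length u)) \<in> A}"
  by (simp add: nths_append nths_Cons)

lemma nths_collapse: "nths (u @ [z] @ v) (collapse (length u) ` \<beta>) =
   nths u \<beta> @ (if length u \<in> \<beta> \<or> Suc (length u) \<in> \<beta> then [z] else []) @
   nths v {j. j + Suc (Suc (length u)) \<in> \<beta>}"
proof -
  have "nths u (collapse (length u) ` \<beta>) = nths u \<beta>"
    by (rule nths_cong_less) (simp add: collapse_mem_image_less)
  moreover have "{j. j + Suc (length u) \<in> collapse (length u) ` \<beta>} = {j. j + Suc (Suc (length u)) \<in> \<beta>}"
    using collapse_mem_image_greater by blast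
  ultimately show ?thesis
    unfolding nths_append_single by (simp only: collapse_mem_image_self)
qed

lemma nths_collapse_outside:
  "length u \<notin> \<beta> \<Longrightarrow> Suc (length u) \<notin> \<beta> \<Longrightarrow>
   nths (u @ [z] @ v) (collapse (length u) ` \<beta>) = nths (u @ [x, y] @ v) \<beta>"
  unfolding nths_collapse nths_append_pair by simp

lemma nths_collapse_joined:
  fixes u v :: "'a list"
  assumes "length u \<in> \<beta>" "Suc (length u) \<in> \<beta>"
  defines "u' \<equiv> nths u \<beta>" and "v' \<equiv> nths v {j. j + Suc (Suc (length u)) \<in> \<beta>}"
  shows "nths (u @ [z] @ v) (collapse (length u) ` \<beta>) = u' @ [z] @ v'"
    and "nths (u @ [x, y] @ v) \<beta> = u' @ [x, y] @ v'"
    and "length u' = rank \<beta> (length u)"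
proof -
  show "nths (u @ [z] @ v) (collapse (length u) ` \<beta>) = u' @ [z] @ v'"
    using assms unfolding nths_collapse by simp
  show "nths (u @ [x, y] @ v) \<beta> = u' @ [x, y] @ v'"
    using assms unfolding nths_append_pair by simp
  show "length u' = rank \<beta> (length u)"
    unfolding u'_def length_nths rank_def by (rule arg_cong[where f = card]) auto
qed

section \<open>Reduction invariance of the weights\<close>

lemma red_eq_less_length: "red_eq F \<pi> s t \<Longrightarrow> s < length F \<and> t < length F"
  unfolding red_eq_def by simp

lemma finite_red_class: "finite {s. red_eq F \<pi> s t}"
  by (rule finite_subset[of _ "{..<length F}"]) (auto dest: red_eq_less_length)

lemma red_eq_refl: "\<pi> \<in> Pf F \<Longrightarrow> r < length F \<Longrightarrow> red_eq F \<pi> r r"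
  using Pf_covers unfolding red_eq_def by fastforce

lemma red_eq_Min_class:
  assumes "\<pi> \<in> Pf F" "j < length F"
  shows "red_eq F \<pi> (Min {s. red_eq F \<pi> s j}) j"
proof -
  have "j \<in> {s. red_eq F \<pi> s j}" using red_eq_refl[OF assms] by simp
  then show ?thesis using Min_in[OF finite_red_class, of F \<pi> j] by blast
qed

definition collapse_part :: "nat \<Rightarrow> nat set set \<Rightarrow> nat set set" where
  "collapse_part p \<pi> = (\<lambda>\<beta>. collapse p ` \<beta>) ` \<pi>"

locale joined_pair =
  fixes u v :: "'q::finite list" and c :: 'q and \<pi> :: "nat set set"
  assumes Pf: "\<pi> \<in> Pf (u @ [c, c] @ v)"
    and joined: "\<exists>\<beta>\<in>\<pi>. length u \<in> \<beta> \<and> Suc (length u) \<in> \<beta>"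
begin

abbreviation "p \<equiv> length u"
abbreviation "F \<equiv> u @ [c, c] @ v"
abbreviation "F' \<equiv> u @ [c] @ v"
abbreviation "g \<equiv> collapse p"
abbreviation "\<pi>' \<equiv> collapse_part p \<pi>"
abbreviation "R \<equiv> red_reps F \<pi>"
abbreviation "R' \<equiv> red_reps F' \<pi>'"

lemma collapse_mem_block_iff:
  assumes "\<beta> \<in> \<pi>"
  shows "g j \<in> g ` \<beta> \<longleftrightarrow> j \<in> \<beta>"
proof
  assume "g j \<in> g ` \<beta>"
  then obtain b where b: "b \<in> \<beta>" "g j = g b" by auto
  show "j \<in> \<beta>"
  proof (cases "j = b")
    case False
    then have "j \<in> {p, Suc p}" "b \<in> {p, Suc p}"
      using collapse_eq_collapse[OF b(2)] by blast+
    moreover obtain B where "B \<in> \<pi>" "p \<in> B" "Suc p \<in> B" using joined by blast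
    ultimately show ?thesis using Pf_disjoint[OF Pf assms _ b(1)] by auto
  qed (use b in simp)
qed auto

lemma inj_on_collapse_image: "inj_on (\<lambda>\<beta>. g ` \<beta>) \<pi>"
proof (rule inj_onI)
  fix \<beta>1 \<beta>2 assume \<beta>: "\<beta>1 \<in> \<pi>" "\<beta>2 \<in> \<pi>" and eq: "g ` \<beta>1 = g ` \<beta>2"
  have "j \<in> \<beta>1 \<longleftrightarrow> j \<in> \<beta>2" for j
    using collapse_mem_block_iff[OF \<beta>(1), of j] collapse_mem_block_iff[OF \<beta>(2), of j] eq by simp
  then show "\<beta>1 = \<beta>2" by blast
qed

lemma vimage_collapse_image: "\<beta> \<in> \<pi> \<Longrightarrow> g -` (g ` \<beta>) = \<beta>"
  using collapse_mem_block_iff by auto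

lemma collapse_less_length: "j < length F \<Longrightarrow> g j < length F'"
  by (auto simp: collapse_def)

lemma collapse_positions: "g ` {0..<length F} = {0..<length F'}"
  using collapse_atLeastLessThan[of p "length F'"] by simp

lemma collapse_part_Pf: "\<pi>' \<in> Pf F'"
  unfolding Pf_def
proof (intro CollectI partition_onI)
  have "\<Union>\<pi>' = g ` \<Union>\<pi>" unfolding collapse_part_def by auto
  also have "\<Union>\<pi> = {0..<length F}" using Pf unfolding Pf_def partition_on_def by simp
  finally show "\<Union>\<pi>' = {0..<length F'}" using collapse_positions by simp
  show "{} \<notin> \<pi>'" using Pf_blockD(2)[OF Pf] unfolding collapse_part_def by auto
  fix b1 b2 assume "b1 \<in> \<pi>'" "b2 \<in> \<pi>'" "b1 \<noteq> b2"
  then obtain \<beta>1 \<beta>2 where \<beta>: "\<beta>1 \<in> \<pi>" "\<beta>2 \<in> \<pi>" "b1 = g ` \<beta>1" "b2 = g ` \<beta>2" "\<beta>1 \<noteq> \<beta>2"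
    unfolding collapse_part_def by auto
  then show "disjnt b1 b2"
    using collapse_mem_block_iff Pf_disjoint[OF Pf] unfolding disjnt_def by blast
qed

lemma nth_collapse: "j < length F \<Longrightarrow> F ! j = F' ! g j"
  by (cases "j < p"; cases "j = p"; cases "j = Suc p") (auto simp: collapse_def nth_append nth_Cons')

lemma red_eq_collapse_iff:
  "red_eq F \<pi> s t \<longleftrightarrow> s < length F \<and> t < length F \<and> red_eq F' \<pi>' (g s) (g t)"
proof (cases "s < length F \<and> t < length F")
  case True
  then have range: "r < length F" if "r \<in> {min s t..max s t}" for r using that by auto
  have same_block: "(\<exists>\<beta>\<in>\<pi>. r \<in> \<beta> \<and> s \<in> \<beta>) \<longleftrightarrow> (\<exists>\<beta>\<in>\<pi>'. g r \<in> \<beta> \<and> g s \<in> \<beta>)" for r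
    unfolding collapse_part_def using collapse_mem_block_iff by auto
  have "(\<forall>r\<in>{min s t..max s t}. F ! r = F ! s \<and> (\<exists>\<beta>\<in>\<pi>. r \<in> \<beta> \<and> s \<in> \<beta>)) \<longleftrightarrow>
        (\<forall>r\<in>g ` {min s t..max s t}. F' ! r = F' ! g s \<and> (\<exists>\<beta>\<in>\<pi>'. r \<in> \<beta> \<and> g s \<in> \<beta>))"
    using range True nth_collapse same_block by auto
  also have "g ` {min s t..max s t} = {min (g s) (g t)..max (g s) (g t)}"
    by (simp add: collapse_atLeastAtMost collapse_min collapse_max)
  finally show ?thesis
    using True collapse_less_length unfolding red_eq_def by auto
qed (auto simp: red_eq_def)

lemma has_earlier_red_eq_iff:
  assumes j: "j < length F"
  shows "(\<exists>s<j. red_eq F \<pi> s j) \<longleftrightarrow> j = Suc p \<or> (\<exists>s'<g j. red_eq F' \<pi>' s' (g j))"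
proof
  assume "\<exists>s<j. red_eq F \<pi> s j"
  then obtain s where s: "s < j" "red_eq F \<pi> s j" by auto
  then have r: "red_eq F' \<pi>' (g s) (g j)" using red_eq_collapse_iff by auto
  show "j = Suc p \<or> (\<exists>s'<g j. red_eq F' \<pi>' s' (g j))"
  proof (cases "g s < g j")
    case False
    then have "g s = g j" using collapse_mono[of s j p] s(1) by simp
    then have "{s, j} = {p, Suc p}" using collapse_eq_collapse s(1) by (metis less_irrefl)
    then show ?thesis using s(1) by (auto simp: doubleton_eq_iff)
  qed (use r in blast)
next
  assume "j = Suc p \<or> (\<exists>s'<g j. red_eq F' \<pi>' s' (g j))"
  then show "\<exists>s<j. red_eq F \<pi> s j"
  proof
    assume "j = Suc p"
    moreover have "red_eq F' \<pi>' p p" by (rule red_eq_refl[OF collapse_part_Pf]) simp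
    ultimately have "red_eq F \<pi> p j" using red_eq_collapse_iff j by (simp add: collapse_def)
    then show ?thesis using \<open>j = Suc p\<close> by blast
  next
    assume "\<exists>s'<g j. red_eq F' \<pi>' s' (g j)"
    then obtain s' where s': "s' < g j" "red_eq F' \<pi>' s' (g j)" by auto
    have "uncollapse p s' < j"
      using collapse_mono[of j "uncollapse p s'" p] s'(1) by (metis collapse_uncollapse not_le)
    moreover have "red_eq F \<pi> (uncollapse p s') j"
      using red_eq_collapse_iff s' j calculation by simp
    ultimately show ?thesis by blast
  qed
qed

lemma red_reps_collapse: "R = {y. y < length F \<and> y \<noteq> Suc p \<and> g y \<in> R'}"
proof -
  have "y \<in> R \<longleftrightarrow> y < length F \<and> y \<noteq> Suc p \<and> g y \<in> R'" for y
  proof (cases "y < length F")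
    case True
    then show ?thesis
      using has_earlier_red_eq_iff[OF True] collapse_less_length[OF True]
      unfolding red_reps_def by blast
  qed (simp add: red_reps_def)
  then show ?thesis by blast
qed

lemma red_faces_collapse: "red_faces F \<pi> = red_faces F' \<pi>'"
proof -
  have less: "x \<in> R' \<Longrightarrow> x < length F'" for x by (simp add: red_reps_def)
  have "nths u R = nths u R'"
    by (rule nths_cong_less) (subst red_reps_collapse, auto simp: collapse_def)
  moreover have "{j. j + Suc (Suc p) \<in> R} = {j. j + Suc p \<in> R'}"
  proof -
    have "j + Suc (Suc p) \<in> R \<longleftrightarrow> j + Suc p \<in> R'" for j
      using less[of "j + Suc p"] by (subst red_reps_collapse) (auto simp: collapse_def)
    then show ?thesis by blast
  qed
  moreover have "Suc p \<notin> R" "p \<in> R \<longleftrightarrow> p \<in> R'"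
    by (subst red_reps_collapse, simp add: collapse_def red_reps_def)+
  ultimately show ?thesis
    unfolding red_faces_def nths_append_pair nths_append_single by simp
qed

lemma Min_red_class_collapse:
  assumes j: "j < length F"
  shows "Min {s. red_eq F \<pi> s j} = uncollapse p (Min {s. red_eq F' \<pi>' s (g j)})"
proof -
  let ?C = "{s. red_eq F' \<pi>' s (g j)}"
  have min: "Min ?C \<in> ?C"
    using red_eq_Min_class[OF collapse_part_Pf collapse_less_length[OF j]] by simp
  have eq: "{s. red_eq F \<pi> s j} = {s. s < length F \<and> g s \<in> ?C}"
    using red_eq_collapse_iff[of _ j] j by blast
  show ?thesis
    unfolding eq
  proof (rule Min_eqI)
    have "Min ?C < length F'" using min red_eq_less_length by blast
    then have "uncollapse p (Min ?C) < length F" by (simp add: uncollapse_def)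
    then show "uncollapse p (Min ?C) \<in> {s. s < length F \<and> g s \<in> ?C}"
      using min by simp
  next
    fix s assume "s \<in> {s. s < length F \<and> g s \<in> ?C}"
    then have "Min ?C \<le> g s" by (auto intro: Min_le finite_red_class)
    then show "uncollapse p (Min ?C) \<le> s" by (rule uncollapse_le)
  qed simp
qed

lemma rank_red_reps_uncollapse:
  assumes m: "m < length F'"
  shows "rank R (uncollapse p m) = rank R' m"
proof -
  let ?S = "{y \<in> R. y < uncollapse p m}"
  have mem_S: "y \<in> ?S \<longleftrightarrow> y < length F \<and> y \<noteq> Suc p \<and> g y \<in> R' \<and> y < uncollapse p m" for y
    by (subst red_reps_collapse) auto
  have inj: "inj_on g ?S"
  proof (rule inj_onI, rule ccontr)
    fix a b assume "a \<in> ?S" "b \<in> ?S" "g a = g b" "a \<noteq> b"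
    then show False using collapse_eq_collapse[of p a b] mem_S by (auto simp: doubleton_eq_iff)
  qed
  have "g ` ?S = {y \<in> R'. y < m}"
  proof (intro equalityI subsetI)
    fix x assume "x \<in> g ` ?S"
    then show "x \<in> {y \<in> R'. y < m}" using mem_S collapse_less by auto
  next
    fix y assume y: "y \<in> {y \<in> R'. y < m}"
    then have "uncollapse p y \<in> ?S"
      using m unfolding mem_S by (auto simp: uncollapse_less_iff) (auto simp: uncollapse_def split: if_splits)
    then show "y \<in> g ` ?S" by (metis collapse_uncollapse image_eqI)
  qed
  then show ?thesis unfolding rank_def using card_image[OF inj] by simp
qed

lemma rank_red_class_collapse:
  assumes j: "j < length F"
  shows "rank R (Min {s. red_eq F \<pi> s j}) = rank R' (Min {s. red_eq F' \<pi>' s (g j)})"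
proof -
  have "Min {s. red_eq F' \<pi>' s (g j)} < length F'"
    using red_eq_Min_class[OF collapse_part_Pf collapse_less_length[OF j]] red_eq_less_length by blast
  then show ?thesis
    unfolding Min_red_class_collapse[OF j] by (rule rank_red_reps_uncollapse)
qed

lemma red_part_collapse: "red_part F \<pi> = red_part F' \<pi>'"
proof -
  have "(\<lambda>j. rank R (Min {s. red_eq F \<pi> s j})) ` \<beta> =
        (\<lambda>j. rank R' (Min {s. red_eq F' \<pi>' s j})) ` g ` \<beta>" if "\<beta> \<in> \<pi>" for \<beta>
  proof -
    have "\<beta> \<subseteq> {0..<length F}" using Pf_blockD(1)[OF Pf that] .
    then show ?thesis
      unfolding image_image using rank_red_class_collapse by (intro image_cong) auto
  qed
  then show ?thesis
    unfolding red_part_def collapse_part_def image_image by (rule image_cong[OF refl])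
qed

lemma weight_collapse_part:
  assumes adm: "admissible \<alpha>"
  shows "\<alpha> F' \<pi>' = \<alpha> F \<pi>"
proof -
  have "\<alpha> F \<pi> = \<alpha> (red_faces F \<pi>) (red_part F \<pi>)"
    by (rule admissible_reduction[OF adm _ Pf]) simp
  also have "\<dots> = \<alpha> (red_faces F' \<pi>') (red_part F' \<pi>')"
    by (simp only: red_faces_collapse red_part_collapse)
  also have "\<dots> = \<alpha> F' \<pi>'"
    by (rule admissible_reduction[OF adm _ collapse_part_Pf, symmetric]) simp
  finally show ?thesis by simp
qed

end

section \<open>Merging two adjacent letters\<close>

definition block_of :: "nat set set \<Rightarrow> nat \<Rightarrow> nat set" where
  "block_of \<pi> j = (THE \<beta>. \<beta> \<in> \<pi> \<and> j \<in> \<beta>)"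

lemma block_of_eq: "\<pi> \<in> Pf F \<Longrightarrow> \<beta> \<in> \<pi> \<Longrightarrow> j \<in> \<beta> \<Longrightarrow> block_of \<pi> j = \<beta>"
  unfolding block_of_def by (rule the_equality) (auto dest: Pf_disjoint)

lemma block_of_mem:
  assumes "\<pi> \<in> Pf F" "j < length F"
  shows "block_of \<pi> j \<in> \<pi>" "j \<in> block_of \<pi> j"
  using Pf_covers[OF assms] block_of_eq[OF assms(1)] by auto

definition split_block :: "nat set set \<Rightarrow> nat set \<Rightarrow> nat set \<Rightarrow> nat set \<Rightarrow> nat set set" where
  "split_block \<pi> \<beta> \<beta>1 \<beta>2 = insert \<beta>1 (insert \<beta>2 (\<pi> - {\<beta>}))"

lemma merge_blocks_Pf:
  assumes \<pi>: "\<pi> \<in> Pf F" and \<beta>: "\<beta>1 \<in> \<pi>" "\<beta>2 \<in> \<pi>"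
  shows "merge_blocks \<pi> \<beta>1 \<beta>2 \<in> Pf F"
  unfolding Pf_def merge_blocks_def
proof (intro CollectI partition_onI)
  show "\<Union>(insert (\<beta>1 \<union> \<beta>2) (\<pi> - {\<beta>1, \<beta>2})) = {0..<length F}"
    using \<pi> \<beta> unfolding Pf_def partition_on_def by blast
  show "{} \<notin> insert (\<beta>1 \<union> \<beta>2) (\<pi> - {\<beta>1, \<beta>2})"
    using Pf_blockD(2)[OF \<pi>] \<beta> by auto
  fix c d assume "c \<in> insert (\<beta>1 \<union> \<beta>2) (\<pi> - {\<beta>1, \<beta>2})" "d \<in> insert (\<beta>1 \<union> \<beta>2) (\<pi> - {\<beta>1, \<beta>2})"
    "c \<noteq> d"
  then show "disjnt c d"
    using Pf_disjoint[OF \<pi>] \<beta> unfolding disjnt_def by blast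
qed

lemma split_block_Pf:
  assumes \<pi>: "\<pi> \<in> Pf F" and \<beta>: "\<beta> \<in> \<pi>" and s: "(\<beta>1, \<beta>2) \<in> splits \<beta> p"
  shows "split_block \<pi> \<beta> \<beta>1 \<beta>2 \<in> Pf F"
  unfolding Pf_def split_block_def
proof (intro CollectI partition_onI)
  have \<beta>12: "\<beta>1 \<union> \<beta>2 = \<beta>" "\<beta>1 \<inter> \<beta>2 = {}" "\<beta>1 \<noteq> {}" "\<beta>2 \<noteq> {}"
    using s by (auto simp: splits_def)
  have rest: "\<delta> \<inter> \<beta> = {}" "\<delta> \<noteq> {}" if "\<delta> \<in> \<pi> - {\<beta>}" for \<delta>
    using that Pf_disjoint[OF \<pi> _ \<beta>] Pf_blockD(2)[OF \<pi>] by blast+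
  have "\<Union>(insert \<beta>1 (insert \<beta>2 (\<pi> - {\<beta>}))) = \<beta> \<union> \<Union>(\<pi> - {\<beta>})"
    using \<beta>12(1) by auto
  also have "\<dots> = {0..<length F}"
    using \<pi> \<beta> unfolding Pf_def partition_on_def by auto
  finally show "\<Union>(insert \<beta>1 (insert \<beta>2 (\<pi> - {\<beta>}))) = {0..<length F}" .
  show "{} \<notin> insert \<beta>1 (insert \<beta>2 (\<pi> - {\<beta>}))"
    using \<beta>12 rest by auto
  fix c d assume "c \<in> insert \<beta>1 (insert \<beta>2 (\<pi> - {\<beta>}))" "d \<in> insert \<beta>1 (insert \<beta>2 (\<pi> - {\<beta>}))"
    "c \<noteq> d"
  moreover have "c \<inter> d = {}" if "c \<in> \<pi> - {\<beta>}" "d \<in> \<pi> - {\<beta>}" "c \<noteq> d"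
    using that Pf_disjoint[OF \<pi>] by blast
  ultimately show "disjnt c d"
    unfolding disjnt_def using \<beta>12(1,2) rest(1) by auto
qed

lemma split_block_fresh:
  assumes \<pi>: "\<pi> \<in> Pf F" and \<beta>: "\<beta> \<in> \<pi>" and s: "(\<beta>1, \<beta>2) \<in> splits \<beta> p"
  shows "\<beta>1 \<notin> \<pi> - {\<beta>}" "\<beta>2 \<notin> \<pi> - {\<beta>}" "\<beta>1 \<noteq> \<beta>2"
  using s Pf_disjoint[OF \<pi> _ \<beta>] unfolding splits_def by blast+

lemma merge_split_block:
  assumes "\<pi> \<in> Pf F" "\<beta> \<in> \<pi>" "(\<beta>1, \<beta>2) \<in> splits \<beta> p"
  shows "merge_blocks (split_block \<pi> \<beta> \<beta>1 \<beta>2) \<beta>1 \<beta>2 = \<pi>"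
  using split_block_fresh[OF assms] assms(2,3)
  unfolding merge_blocks_def split_block_def splits_def by auto

lemma split_merge_blocks:
  assumes "\<pi> \<in> Pf F" "\<beta>1 \<in> \<pi>" "\<beta>2 \<in> \<pi>" "\<beta>1 \<noteq> \<beta>2"
  shows "split_block (merge_blocks \<pi> \<beta>1 \<beta>2) (\<beta>1 \<union> \<beta>2) \<beta>1 \<beta>2 = \<pi>"
proof -
  have "\<beta>1 \<union> \<beta>2 \<notin> \<pi>"
    using assms Pf_disjoint[OF assms(1)] Pf_blockD(2)[OF assms(1)] by blast
  then show ?thesis
    using assms(2,3) unfolding merge_blocks_def split_block_def by blast
qed

lemma prod_split_block:
  assumes "\<pi> \<in> Pf F" "\<beta> \<in> \<pi>" "(\<beta>1, \<beta>2) \<in> splits \<beta> p"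
  shows "(\<Prod>\<gamma>\<in>split_block \<pi> \<beta> \<beta>1 \<beta>2. f \<gamma>) = f \<beta>1 * f \<beta>2 * (\<Prod>\<gamma>\<in>\<pi> - {\<beta>}. f \<gamma>)"
  using split_block_fresh[OF assms] finite_Pf_partition[OF assms(1)]
  by (simp add: split_block_def mult.assoc)

locale adjacent_letters =
  fixes \<alpha> :: "'q::finite list \<Rightarrow> nat set set \<Rightarrow> complex" and \<Phi> :: "'a::ring \<Rightarrow> complex"
    and u v :: "('q \<times> 'a) list" and x y :: "'q \<times> 'a"
  assumes adm: "admissible \<alpha>" and same_face: "fst x = fst y"
begin

abbreviation "p \<equiv> length u"
abbreviation "w \<equiv> u @ [x, y] @ v"
abbreviation "w' \<equiv> u @ [(fst x, snd x * snd y)] @ v"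
abbreviation "F \<equiv> map fst w"
abbreviation "F' \<equiv> map fst w'"
abbreviation "K \<equiv> word_cumulant \<alpha> \<Phi>"

definition joined :: "nat set set set" where
  "joined = {\<pi> \<in> Pf F. Suc p \<in> block_of \<pi> p}"

definition separated :: "nat set set set" where
  "separated = {\<pi> \<in> Pf F. Suc p \<notin> block_of \<pi> p}"

lemma face_words: "F = map fst u @ [fst x, fst x] @ map fst v" "F' = map fst u @ [fst x] @ map fst v"
  using same_face by simp_all

lemma joined_block:
  assumes "\<pi> \<in> joined"
  shows "block_of \<pi> p \<in> \<pi>" "p \<in> block_of \<pi> p" "Suc p \<in> block_of \<pi> p"
  using assms block_of_mem[of \<pi> F p] by (auto simp: joined_def)

lemma finite_joined: "finite joined" and finite_separated: "finite separated"
  using finite_Pf[of F] by (auto simp: joined_def separated_def intro: finite_subset)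

lemma joined_other_block:
  assumes \<pi>: "\<pi> \<in> joined" and \<beta>: "\<beta> \<in> \<pi>" "\<beta> \<noteq> block_of \<pi> p"
  shows "p \<notin> \<beta>" "Suc p \<notin> \<beta>"
proof -
  have Pf: "\<pi> \<in> Pf F" using \<pi> by (simp add: joined_def)
  show "p \<notin> \<beta>" using block_of_eq[OF Pf \<beta>(1), of p] \<beta>(2) by blast
  show "Suc p \<notin> \<beta>"
    using Pf_disjoint[OF Pf \<beta>(1) joined_block(1)[OF \<pi>], of "Suc p"] joined_block(3)[OF \<pi>] \<beta>(2)
    by blast
qed

lemma joined_pair_joined: "\<pi> \<in> joined \<Longrightarrow> joined_pair (map fst u) (map fst v) (fst x) \<pi>"
  using joined_block[of \<pi>] face_words(1) by unfold_locales (auto simp: joined_def)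

lemma vimage_collapse_part_joined:
  assumes \<pi>': "\<pi>' \<in> Pf F'"
  shows "(\<lambda>\<beta>. collapse p -` \<beta>) ` \<pi>' \<in> joined"
proof -
  let ?\<pi> = "(\<lambda>\<beta>. collapse p -` \<beta>) ` \<pi>'"
  have "partition_on (collapse p -` {0..<length F'}) ((-`) (collapse p) ` \<pi>' - {{}})"
    using \<pi>' unfolding Pf_def by (auto intro: partition_on_vimage)
  moreover have "collapse p -` {0..<length F'} = {0..<length F}"
    by (auto simp: collapse_def split: if_splits)
  moreover have "{} \<notin> ?\<pi>"
  proof
    assume "{} \<in> ?\<pi>"
    then obtain \<beta> where "\<beta> \<in> \<pi>'" "collapse p -` \<beta> = {}" by auto
    moreover obtain r where "r \<in> \<beta>" using Pf_blockD(2)[OF \<pi>' \<open>\<beta> \<in> \<pi>'\<close>] by blast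
    ultimately show False using collapse_uncollapse[of p r] by blast
  qed
  ultimately have \<pi>: "?\<pi> \<in> Pf F" by (simp add: Pf_def)
  obtain \<beta> where "\<beta> \<in> \<pi>'" "p \<in> \<beta>" using Pf_covers[OF \<pi>', of p] by auto
  moreover have "collapse p p = p" "collapse p (Suc p) = p" by (simp_all add: collapse_def)
  ultimately have "block_of ?\<pi> p = collapse p -` \<beta>" "Suc p \<in> collapse p -` \<beta>"
    using block_of_eq[OF \<pi>] by auto
  then show "?\<pi> \<in> joined" using \<pi> by (simp add: joined_def)
qed

lemma bij_betw_collapse_part: "bij_betw (collapse_part p) joined (Pf F')"
proof (rule bij_betw_byWitness[where f' = "\<lambda>\<pi>'. (\<lambda>\<beta>. collapse p -` \<beta>) ` \<pi>'"])
  show "\<forall>\<pi>\<in>joined. (\<lambda>\<beta>. collapse p -` \<beta>) ` collapse_part p \<pi> = \<pi>"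
    using joined_pair.vimage_collapse_image[OF joined_pair_joined]
    unfolding collapse_part_def image_image by simp
  show "\<forall>\<pi>'\<in>Pf F'. collapse_part p ((\<lambda>\<beta>. collapse p -` \<beta>) ` \<pi>') = \<pi>'"
    unfolding collapse_part_def image_image using surj_image_vimage_eq[OF surj_collapse] by simp
  show "collapse_part p ` joined \<subseteq> Pf F'"
    using joined_pair.collapse_part_Pf[OF joined_pair_joined] face_words(2) by auto
  show "(\<lambda>\<pi>'. (\<lambda>\<beta>. collapse p -` \<beta>) ` \<pi>') ` Pf F' \<subseteq> joined"
    using vimage_collapse_part_joined by blast
qed

lemma one_block_joined:
  "{{0..<length w}} \<in> joined" "block_of {{0..<length w}} p = {0..<length w}"
proof -
  have one: "{{0..<length w}} \<in> Pf F" using one_block_Pf[of F] by simp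
  then show "block_of {{0..<length w}} p = {0..<length w}" by (rule block_of_eq) auto
  with one show "{{0..<length w}} \<in> joined" by (simp add: joined_def)
qed

lemma collapse_part_term:
  assumes \<pi>: "\<pi> \<in> joined"
  shows "\<alpha> F' (collapse_part p \<pi>) * (\<Prod>\<beta>\<in>collapse_part p \<pi>. K (nths w' \<beta>)) =
    \<alpha> F \<pi> * (\<Prod>\<beta>\<in>\<pi> - {block_of \<pi> p}. K (nths w \<beta>)) * K (nths w' (collapse p ` block_of \<pi> p))"
proof -
  let ?B = "block_of \<pi> p"
  have fin: "finite \<pi>" using \<pi> finite_Pf_partition by (auto simp: joined_def)
  have "(\<Prod>\<beta>\<in>collapse_part p \<pi>. K (nths w' \<beta>)) = (\<Prod>\<beta>\<in>\<pi>. K (nths w' (collapse p ` \<beta>)))"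
    using prod.reindex[OF joined_pair.inj_on_collapse_image[OF joined_pair_joined[OF \<pi>]]]
    by (simp add: collapse_part_def comp_def)
  also have "\<dots> = (\<Prod>\<beta>\<in>\<pi> - {?B}. K (nths w' (collapse p ` \<beta>))) * K (nths w' (collapse p ` ?B))"
    using prod.remove[OF fin joined_block(1)[OF \<pi>]] by (simp add: mult.commute)
  also have "(\<Prod>\<beta>\<in>\<pi> - {?B}. K (nths w' (collapse p ` \<beta>))) = (\<Prod>\<beta>\<in>\<pi> - {?B}. K (nths w \<beta>))"
  proof (rule prod.cong[OF refl])
    fix \<beta> assume "\<beta> \<in> \<pi> - {?B}"
    then have "p \<notin> \<beta>" "Suc p \<notin> \<beta>" using joined_other_block[OF \<pi>] by auto
    then have "nths w' (collapse p ` \<beta>) = nths w \<beta>" by (rule nths_collapse_outside)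
    then show "K (nths w' (collapse p ` \<beta>)) = K (nths w \<beta>)" by (rule arg_cong)
  qed
  finally show ?thesis
    using joined_pair.weight_collapse_part[OF joined_pair_joined[OF \<pi>] adm] face_words
    by (simp add: mult.assoc)
qed

lemma word_moment_merged:
  "word_moment \<Phi> w' = (\<Sum>\<pi>\<in>joined. \<alpha> F \<pi> * (\<Prod>\<beta>\<in>\<pi> - {block_of \<pi> p}. K (nths w \<beta>)) *
      K (nths w' (collapse p ` block_of \<pi> p)))"
proof -
  have "word_moment \<Phi> w' = (\<Sum>\<pi>'\<in>Pf F'. \<alpha> F' \<pi>' * (\<Prod>\<beta>\<in>\<pi>'. K (nths w' \<beta>)))"
    by (rule word_moment_expansion[OF adm]) simp
  also have "\<dots> = (\<Sum>\<pi>\<in>joined. \<alpha> F' (collapse_part p \<pi>) * (\<Prod>\<beta>\<in>collapse_part p \<pi>. K (nths w' \<beta>)))"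
    by (rule sum.reindex_bij_betw[OF bij_betw_collapse_part, symmetric])
  also have "\<dots> = (\<Sum>\<pi>\<in>joined. \<alpha> F \<pi> * (\<Prod>\<beta>\<in>\<pi> - {block_of \<pi> p}. K (nths w \<beta>)) *
      K (nths w' (collapse p ` block_of \<pi> p)))"
    using collapse_part_term by (rule sum.cong[OF refl])
  finally show ?thesis .
qed

lemma split_block_joined:
  assumes \<pi>: "\<pi> \<in> joined" and s: "(\<beta>1, \<beta>2) \<in> splits (block_of \<pi> p) p"
  defines "\<sigma> \<equiv> split_block \<pi> (block_of \<pi> p) \<beta>1 \<beta>2"
  shows "\<sigma> \<in> Pf F" "block_of \<sigma> p = \<beta>1" "block_of \<sigma> (Suc p) = \<beta>2"
proof -
  have Pf: "\<pi> \<in> Pf F" using \<pi> by (simp add: joined_def)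
  show \<sigma>: "\<sigma> \<in> Pf F" unfolding \<sigma>_def by (rule split_block_Pf[OF Pf joined_block(1)[OF \<pi>] s])
  have "\<beta>1 \<in> \<sigma>" "\<beta>2 \<in> \<sigma>" unfolding \<sigma>_def split_block_def by simp_all
  moreover have "p \<in> \<beta>1" "Suc p \<in> \<beta>2" using s by (simp_all add: splits_def)
  ultimately show "block_of \<sigma> p = \<beta>1" "block_of \<sigma> (Suc p) = \<beta>2"
    using block_of_eq[OF \<sigma>] by simp_all
qed

lemma merge_separated:
  assumes \<sigma>: "\<sigma> \<in> separated"
  defines "\<beta>1 \<equiv> block_of \<sigma> p" and "\<beta>2 \<equiv> block_of \<sigma> (Suc p)"
  defines "\<pi> \<equiv> merge_blocks \<sigma> \<beta>1 \<beta>2"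
  shows "\<pi> \<in> joined" "block_of \<pi> p = \<beta>1 \<union> \<beta>2" "(\<beta>1, \<beta>2) \<in> splits (\<beta>1 \<union> \<beta>2) p"
    "split_block \<pi> (\<beta>1 \<union> \<beta>2) \<beta>1 \<beta>2 = \<sigma>"
proof -
  have Pf: "\<sigma> \<in> Pf F" and sep: "Suc p \<notin> \<beta>1" using \<sigma> by (auto simp: separated_def \<beta>1_def)
  have \<beta>1: "\<beta>1 \<in> \<sigma>" "p \<in> \<beta>1" and \<beta>2: "\<beta>2 \<in> \<sigma>" "Suc p \<in> \<beta>2"
    using block_of_mem[OF Pf] by (auto simp: \<beta>1_def \<beta>2_def)
  have ne: "\<beta>1 \<noteq> \<beta>2" using sep \<beta>2 by auto
  have \<pi>: "\<pi> \<in> Pf F" unfolding \<pi>_def by (rule merge_blocks_Pf[OF Pf \<beta>1(1) \<beta>2(1)])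
  show B: "block_of \<pi> p = \<beta>1 \<union> \<beta>2"
    using \<beta>1 by (intro block_of_eq[OF \<pi>]) (auto simp: \<pi>_def merge_blocks_def)
  show "\<pi> \<in> joined" using \<pi> B \<beta>2 by (simp add: joined_def)
  show "(\<beta>1, \<beta>2) \<in> splits (\<beta>1 \<union> \<beta>2) p"
    using Pf_disjoint[OF Pf \<beta>1(1) \<beta>2(1)] ne \<beta>1 \<beta>2 by (auto simp: splits_def)
  show "split_block \<pi> (\<beta>1 \<union> \<beta>2) \<beta>1 \<beta>2 = \<sigma>"
    unfolding \<pi>_def by (rule split_merge_blocks[OF Pf \<beta>1(1) \<beta>2(1) ne])
qed

lemma bij_betw_split_block:
  "bij_betw (\<lambda>(\<pi>, \<beta>1, \<beta>2). split_block \<pi> (block_of \<pi> p) \<beta>1 \<beta>2)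
     (SIGMA \<pi>:joined. splits (block_of \<pi> p) p) separated"
proof -
  let ?split = "\<lambda>(\<pi>, \<beta>1, \<beta>2). split_block \<pi> (block_of \<pi> p) \<beta>1 \<beta>2"
  let ?merge = "\<lambda>\<sigma>. (merge_blocks \<sigma> (block_of \<sigma> p) (block_of \<sigma> (Suc p)), block_of \<sigma> p, block_of \<sigma> (Suc p))"
  show ?thesis
  proof (rule bij_betw_byWitness[where f' = ?merge])
    show "\<forall>t\<in>SIGMA \<pi>:joined. splits (block_of \<pi> p) p. ?merge (?split t) = t"
    proof (intro ballI)
      fix t assume "t \<in> (SIGMA \<pi>:joined. splits (block_of \<pi> p) p)"
      then obtain \<pi> \<beta>1 \<beta>2 where t: "t = (\<pi>, \<beta>1, \<beta>2)"
        and \<pi>: "\<pi> \<in> joined" and s: "(\<beta>1, \<beta>2) \<in> splits (block_of \<pi> p) p" by auto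
      have "\<pi> \<in> Pf F" using \<pi> by (simp add: joined_def)
      then show "?merge (?split t) = t"
        using split_block_joined(2,3)[OF \<pi> s] merge_split_block[OF _ joined_block(1)[OF \<pi>] s]
        by (simp add: t)
    qed
    show "\<forall>\<sigma>\<in>separated. ?split (?merge \<sigma>) = \<sigma>"
      using merge_separated(2,4) by simp
    show "?split ` (SIGMA \<pi>:joined. splits (block_of \<pi> p) p) \<subseteq> separated"
    proof (rule image_subsetI)
      fix t assume "t \<in> (SIGMA \<pi>:joined. splits (block_of \<pi> p) p)"
      then obtain \<pi> \<beta>1 \<beta>2 where t: "t = (\<pi>, \<beta>1, \<beta>2)"
        and \<pi>: "\<pi> \<in> joined" and s: "(\<beta>1, \<beta>2) \<in> splits (block_of \<pi> p) p" by auto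
      then have "Suc p \<notin> \<beta>1" by (auto simp: splits_def)
      then show "?split t \<in> separated"
        using split_block_joined(1,2)[OF \<pi> s] by (simp add: t separated_def)
    qed
    show "?merge ` separated \<subseteq> (SIGMA \<pi>:joined. splits (block_of \<pi> p) p)"
      using merge_separated(1-3) by auto
  qed
qed

lemma weight_split_block:
  assumes \<pi>: "\<pi> \<in> joined" and s: "(\<beta>1, \<beta>2) \<in> splits (block_of \<pi> p) p"
  shows "\<alpha> F (split_block \<pi> (block_of \<pi> p) \<beta>1 \<beta>2) =
    \<alpha> F \<pi> * \<alpha> (nths F (block_of \<pi> p)) (relabel (block_of \<pi> p) {\<beta>1, \<beta>2})"
proof -
  let ?\<sigma> = "split_block \<pi> (block_of \<pi> p) \<beta>1 \<beta>2"
  have Pf: "\<pi> \<in> Pf F" using \<pi> by (simp add: joined_def)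
  have "\<beta>1 \<in> ?\<sigma>" "\<beta>2 \<in> ?\<sigma>" "p \<in> \<beta>1" "Suc p \<in> \<beta>2" "\<beta>1 \<union> \<beta>2 = block_of \<pi> p"
    using s by (auto simp: split_block_def splits_def)
  moreover have "\<beta>1 \<noteq> \<beta>2" using s by (auto simp: splits_def)
  moreover have "F ! p = F ! Suc p" using same_face by (simp add: nth_append)
  ultimately show ?thesis
    using admissible_merge[OF adm _ split_block_joined(1)[OF \<pi> s], of \<beta>1 \<beta>2 p]
      merge_split_block[OF Pf joined_block(1)[OF \<pi>] s]
    by simp
qed

lemma split_block_term:
  assumes \<pi>: "\<pi> \<in> joined" and s: "(\<beta>1, \<beta>2) \<in> splits (block_of \<pi> p) p"
  shows "\<alpha> F (split_block \<pi> (block_of \<pi> p) \<beta>1 \<beta>2) * (\<Prod>\<beta>\<in>split_block \<pi> (block_of \<pi> p) \<beta>1 \<beta>2. K (nths w \<beta>)) =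
    \<alpha> F \<pi> * (\<Prod>\<beta>\<in>\<pi> - {block_of \<pi> p}. K (nths w \<beta>)) *
    (\<alpha> (nths F (block_of \<pi> p)) (relabel (block_of \<pi> p) {\<beta>1, \<beta>2}) * K (nths w \<beta>1) * K (nths w \<beta>2))"
proof -
  have Pf: "\<pi> \<in> Pf F" using \<pi> by (simp add: joined_def)
  show ?thesis
    using weight_split_block[OF \<pi> s]
      prod_split_block[OF Pf joined_block(1)[OF \<pi>] s, where f = "\<lambda>\<beta>. K (nths w \<beta>)"]
    by (simp add: mult_ac)
qed

lemma sum_separated:
  "(\<Sum>\<sigma>\<in>separated. \<alpha> F \<sigma> * (\<Prod>\<beta>\<in>\<sigma>. K (nths w \<beta>))) =
    (\<Sum>\<pi>\<in>joined. \<alpha> F \<pi> * (\<Prod>\<beta>\<in>\<pi> - {block_of \<pi> p}. K (nths w \<beta>)) * split_sum \<alpha> \<Phi> w (block_of \<pi> p) p)"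
proof -
  let ?T = "\<lambda>\<sigma>. \<alpha> F \<sigma> * (\<Prod>\<beta>\<in>\<sigma>. K (nths w \<beta>))"
  have "sum ?T separated =
      (\<Sum>(\<pi>, \<beta>1, \<beta>2)\<in>(SIGMA \<pi>:joined. splits (block_of \<pi> p) p). ?T (split_block \<pi> (block_of \<pi> p) \<beta>1 \<beta>2))"
    using sum.reindex_bij_betw[OF bij_betw_split_block, of ?T] by (simp add: case_prod_unfold)
  also have "\<dots> = (\<Sum>\<pi>\<in>joined. \<Sum>(\<beta>1, \<beta>2)\<in>splits (block_of \<pi> p) p. ?T (split_block \<pi> (block_of \<pi> p) \<beta>1 \<beta>2))"
    by (rule sum.Sigma[symmetric, OF finite_joined])
      (auto simp: joined_def intro!: finite_splits Pf_blockD(3) joined_block(1))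
  also have "\<dots> = (\<Sum>\<pi>\<in>joined. \<alpha> F \<pi> * (\<Prod>\<beta>\<in>\<pi> - {block_of \<pi> p}. K (nths w \<beta>)) *
      split_sum \<alpha> \<Phi> w (block_of \<pi> p) p)"
    unfolding split_sum_def sum_distrib_left using split_block_term
    by (intro sum.cong refl) (auto split: prod.split)
  finally show ?thesis .
qed

lemma word_moment_split:
  "word_moment \<Phi> w = (\<Sum>\<pi>\<in>joined. \<alpha> F \<pi> * (\<Prod>\<beta>\<in>\<pi> - {block_of \<pi> p}. K (nths w \<beta>)) *
      (K (nths w (block_of \<pi> p)) + split_sum \<alpha> \<Phi> w (block_of \<pi> p) p))"
proof -
  let ?T = "\<lambda>\<pi>. \<alpha> F \<pi> * (\<Prod>\<beta>\<in>\<pi>. K (nths w \<beta>))"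
  have "Pf F = joined \<union> separated" "joined \<inter> separated = {}"
    by (auto simp: joined_def separated_def)
  then have "word_moment \<Phi> w = sum ?T joined + sum ?T separated"
    using word_moment_expansion[OF adm, of w \<Phi>]
    by (simp add: sum.union_disjoint[OF finite_joined finite_separated])
  also have "sum ?T joined =
      (\<Sum>\<pi>\<in>joined. \<alpha> F \<pi> * (\<Prod>\<beta>\<in>\<pi> - {block_of \<pi> p}. K (nths w \<beta>)) * K (nths w (block_of \<pi> p)))"
  proof (rule sum.cong[OF refl])
    fix \<pi> assume \<pi>: "\<pi> \<in> joined"
    then have "finite \<pi>" by (auto simp: joined_def intro: finite_Pf_partition)
    then show "?T \<pi> = \<alpha> F \<pi> * (\<Prod>\<beta>\<in>\<pi> - {block_of \<pi> p}. K (nths w \<beta>)) * K (nths w (block_of \<pi> p))"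
      using prod.remove[OF _ joined_block(1)[OF \<pi>], of "\<lambda>\<beta>. K (nths w \<beta>)"] by (simp add: mult_ac)
  qed
  also have "sum ?T separated = (\<Sum>\<pi>\<in>joined. \<alpha> F \<pi> * (\<Prod>\<beta>\<in>\<pi> - {block_of \<pi> p}. K (nths w \<beta>)) *
      split_sum \<alpha> \<Phi> w (block_of \<pi> p) p)"
    by (rule sum_separated)
  finally show ?thesis
    by (simp add: sum.distrib[symmetric] distrib_left)
qed

lemma joined_block_words:
  assumes \<pi>: "\<pi> \<in> joined" "\<pi> \<noteq> {{0..<length w}}"
  obtains u' v' where "nths w' (collapse p ` block_of \<pi> p) = u' @ [(fst x, snd x * snd y)] @ v'"
    and "nths w (block_of \<pi> p) = u' @ [x, y] @ v'" and "length u' = rank (block_of \<pi> p) p"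
    and "length u' + length v' < length u + length v"
proof -
  let ?B = "block_of \<pi> p"
  let ?u' = "nths u ?B" and ?v' = "nths v {j. j + Suc (Suc p) \<in> ?B}"
  have Pf: "\<pi> \<in> Pf F" using \<pi> by (simp add: joined_def)
  note words = nths_collapse_joined[OF joined_block(2,3)[OF \<pi>(1)]]
  show ?thesis
  proof (rule that)
    show "nths w' (collapse p ` ?B) = ?u' @ [(fst x, snd x * snd y)] @ ?v'" by (rule words(1))
    show "nths w ?B = ?u' @ [x, y] @ ?v'" by (rule words(2))
    show "length ?u' = rank ?B p" by (rule words(3))
    have "length (nths w ?B) < length w"
      using nths_block_shorter[of \<pi> w ?B] Pf \<pi>(2) joined_block(1)[OF \<pi>(1)] by simp
    then show "length ?u' + length ?v' < length u + length v"
      unfolding words(2) by simp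
  qed
qed

end

lemma sum_eq_imp_eq_at:
  fixes f g :: "'a \<Rightarrow> 'b::ab_group_add"
  assumes "finite A" "a \<in> A" "(\<Sum>z\<in>A. f z) = (\<Sum>z\<in>A. g z)" "\<And>z. z \<in> A - {a} \<Longrightarrow> f z = g z"
  shows "f a = g a"
proof -
  have "(\<Sum>z\<in>A - {a}. f z) = (\<Sum>z\<in>A - {a}. g z)" using assms(4) by (rule sum.cong[OF refl])
  then show ?thesis using assms(3) sum.remove[OF assms(1,2), of f] sum.remove[OF assms(1,2), of g] by simp
qed

lemma word_moment_merge:
  "word_moment \<Phi> (u @ [(fst x, snd x * snd y)] @ v) = word_moment \<Phi> (u @ [x, y] @ v)"
  unfolding word_moment_def using mprod_merge[of "map snd u" "snd x" "snd y" "map snd v"] by simp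

theorem word_cumulant_merge:
  assumes adm: "admissible \<alpha>" and same_face: "fst x = fst y"
  shows "word_cumulant \<alpha> \<Phi> (u @ [(fst x, snd x * snd y)] @ v) =
    word_cumulant \<alpha> \<Phi> (u @ [x, y] @ v) +
    split_sum \<alpha> \<Phi> (u @ [x, y] @ v) {0..<length (u @ [x, y] @ v)} (length u)"
  using same_face
proof (induction "length u + length v" arbitrary: u v x y rule: less_induct)
  case less
  interpret adjacent_letters \<alpha> \<Phi> u v x y by unfold_locales (use adm less.prems in auto)
  let ?one = "{{0..<length w}}"
  let ?c = "\<lambda>\<pi>. \<alpha> F \<pi> * (\<Prod>\<beta>\<in>\<pi> - {block_of \<pi> p}. K (nths w \<beta>))"
  let ?merged = "\<lambda>\<pi>. ?c \<pi> * K (nths w' (collapse p ` block_of \<pi> p))"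
  let ?split = "\<lambda>\<pi>. ?c \<pi> * (K (nths w (block_of \<pi> p)) + split_sum \<alpha> \<Phi> w (block_of \<pi> p) p)"
  have "?merged ?one = ?split ?one"
  proof (rule sum_eq_imp_eq_at[OF finite_joined one_block_joined(1)])
    show "sum ?merged joined = sum ?split joined"
      using word_moment_merged word_moment_split word_moment_merge[of \<Phi> u x y v] by simp
  next
    fix \<pi> assume \<pi>: "\<pi> \<in> joined - {?one}"
    let ?B = "block_of \<pi> p"
    obtain u' v' where w': "nths w' (collapse p ` ?B) = u' @ [(fst x, snd x * snd y)] @ v'"
      and w: "nths w ?B = u' @ [x, y] @ v'" and rank: "length u' = rank ?B p"
      and shorter: "length u' + length v' < length u + length v"
      using joined_block_words[of \<pi>] \<pi> by blast
    have B: "?B \<subseteq> {0..<length w}" "p \<in> ?B" "Suc p \<in> ?B"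
      using \<pi> Pf_blockD(1)[of \<pi> F ?B] joined_block[of \<pi>] by (auto simp: joined_def)
    have "K (nths w' (collapse p ` ?B)) =
        K (nths w ?B) + split_sum \<alpha> \<Phi> (nths w ?B) {0..<length (nths w ?B)} (length u')"
      using less.hyps[OF shorter less.prems] w' w by simp
    also have "\<dots> = K (nths w ?B) + split_sum \<alpha> \<Phi> w ?B p"
      using split_sum_nths[OF B] rank length_nths_subset[OF B(1)] by simp
    finally show "?merged \<pi> = ?split \<pi>" by simp
  qed
  moreover have "?c ?one = 1"
    using admissible_one_block[OF adm, of F] one_block_joined(2) by simp
  moreover have "collapse p ` {0..<length w} = {0..<length w'}"
    using collapse_atLeastLessThan[of p "length w'"] by simp
  ultimately show ?case using one_block_joined(2) by (simp add: nths_all)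
qed

lemma splits_eq_two_block_partitions:
  "{(\<beta>1, \<beta>2). {\<beta>1, \<beta>2} \<in> Pf F \<and> \<beta>1 \<noteq> \<beta>2 \<and> p \<in> \<beta>1 \<and> Suc p \<in> \<beta>2} = splits {0..<length F} p"
  unfolding Pf_def partition_on_def pairwise_def disjnt_def splits_def by auto

lemma cumulant_merge_adjacent:
  assumes adm: "admissible \<alpha>" and same_face: "fst x = fst y"
    and Y: "is_monomial I Y" and eval: "eval_monomial a Y = u @ [x, y] @ v"
    and Y': "is_monomial I' Y'" and eval': "eval_monomial a' Y' = u @ [(fst x, snd x * snd y)] @ v"
  shows "cumulant \<alpha> \<Phi> a' I' Y' = cumulant \<alpha> \<Phi> a I Y +
    (\<Sum>(\<beta>1, \<beta>2) \<in> {(\<beta>1, \<beta>2). {\<beta>1, \<beta>2} \<in> Pf (map fst Y) \<and> \<beta>1 \<noteq> \<beta>2 \<and>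
        length u \<in> \<beta>1 \<and> Suc (length u) \<in> \<beta>2}.
      \<alpha> (map fst Y) {\<beta>1, \<beta>2} * cumulant \<alpha> \<Phi> a I (nths Y \<beta>1) * cumulant \<alpha> \<Phi> a I (nths Y \<beta>2))"
proof -
  let ?w = "u @ [x, y] @ v"
  have faces: "map fst Y = map fst ?w" using map_fst_eval_monomial[of a Y] eval by simp
  have len: "length Y = length ?w" using arg_cong[OF eval, of length] by (simp add: eval_monomial_def)
  have summand: "\<alpha> (map fst Y) {\<beta>1, \<beta>2} * cumulant \<alpha> \<Phi> a I (nths Y \<beta>1) * cumulant \<alpha> \<Phi> a I (nths Y \<beta>2) =
      \<alpha> (nths (map fst ?w) {0..<length ?w}) (relabel {0..<length ?w} {\<beta>1, \<beta>2}) *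
      word_cumulant \<alpha> \<Phi> (nths ?w \<beta>1) * word_cumulant \<alpha> \<Phi> (nths ?w \<beta>2)"
    if s: "(\<beta>1, \<beta>2) \<in> splits {0..<length ?w} (length u)" for \<beta>1 \<beta>2
  proof -
    have "{\<beta>1, \<beta>2} \<in> Pf (map fst Y)" using s len splits_eq_two_block_partitions[of "map fst Y"] by auto
    then have "cumulant \<alpha> \<Phi> a I (nths Y \<beta>) = word_cumulant \<alpha> \<Phi> (nths ?w \<beta>)" if "\<beta> \<in> {\<beta>1, \<beta>2}" for \<beta>
      using cumulant_eq_word_cumulant[OF adm is_monomial_nths[OF Y _ that], where \<Phi> = \<Phi> and a = a] eval
      by (simp add: eval_monomial_nths)
    moreover have "\<beta>1 \<subseteq> {0..<length ?w}" "\<beta>2 \<subseteq> {0..<length ?w}" using s by (auto simp: splits_def)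
    ultimately show ?thesis using faces by (simp add: relabel_upt nths_all)
  qed
  have "cumulant \<alpha> \<Phi> a' I' Y' = word_cumulant \<alpha> \<Phi> ?w + split_sum \<alpha> \<Phi> ?w {0..<length ?w} (length u)"
    using cumulant_eq_word_cumulant[OF adm Y', where \<Phi> = \<Phi> and a = a'] eval'
      word_cumulant_merge[OF adm same_face, where \<Phi> = \<Phi> and u = u and v = v] by simp
  also have "split_sum \<alpha> \<Phi> ?w {0..<length ?w} (length u) =
      (\<Sum>(\<beta>1, \<beta>2) \<in> splits {0..<length ?w} (length u).
        \<alpha> (map fst Y) {\<beta>1, \<beta>2} * cumulant \<alpha> \<Phi> a I (nths Y \<beta>1) * cumulant \<alpha> \<Phi> a I (nths Y \<beta>2))"
    unfolding split_sum_def using summand by (intro sum.cong refl) (auto split: prod.split)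
  finally show ?thesis
    using cumulant_eq_word_cumulant[OF adm Y, where \<Phi> = \<Phi> and a = a] eval
      splits_eq_two_block_partitions[of "map fst Y"] len
    by simp
qed

lemma upt_split_pair: "m \<le> i \<Longrightarrow> i < n \<Longrightarrow> [m..<Suc n] = [m..<i] @ [i, Suc i] @ [Suc (Suc i)..<Suc n]"
  by (metis append_Cons append_Nil upt_add_eq_append le_add_diff_inverse upt_conv_Cons
      Suc_le_eq Suc_less_eq less_Suc_eq_le order.strict_implies_order)

theorem lemma8p1:
  fixes \<alpha> :: "'q::finite list \<Rightarrow> nat set set \<Rightarrow> complex"
    and \<Phi> :: "'a::ring \<Rightarrow> complex"
    and a :: "'q \<Rightarrow> nat \<Rightarrow> 'a"
    and I :: "'q \<Rightarrow> nat set"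
    and f :: "nat \<Rightarrow> 'q"
    and n i :: nat and q :: 'q
  assumes adm: "admissible \<alpha>"
    and I_sub: "\<And>Q. I Q \<subseteq> {1..n}"
    and I_disj: "disjoint_family I"
    and I_cover: "(\<Union>Q. I Q) = {1..n}"
    and f_def: "\<And>l. l \<in> {1..n} \<Longrightarrow> l \<in> I (f l)"
    and i_range: "i \<in> {1..n-1}"
    and fi: "f i = q" and fi1: "f (Suc i) = q"
  defines "a2 \<equiv> (\<lambda>Q j. case j of Inl l \<Rightarrow> a Q l | Inr _ \<Rightarrow> a q i * a q (Suc i))"
    and "It \<equiv> (\<lambda>Q. if Q = q then Inl ` (I q - {i, Suc i}) \<union> {Inr {i, Suc i}} else Inl ` I Q)"
    and "X \<equiv> map (\<lambda>l. (f l, l)) [1..<Suc n]"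
    and "Xt \<equiv> map (\<lambda>l. (f l, Inl l)) [1..<i] @ [(q, Inr {i, Suc i})] @
              map (\<lambda>l. (f l, Inl l)) [Suc (Suc i)..<Suc n]"
  shows "moment \<Phi> a2 Xt = moment \<Phi> a X \<and>
         cumulant \<alpha> \<Phi> a2 It Xt =
           cumulant \<alpha> \<Phi> a I X +
           (\<Sum>(\<beta>1, \<beta>2) \<in> {(\<beta>1, \<beta>2). {\<beta>1, \<beta>2} \<in> Pf (map fst X) \<and> \<beta>1 \<noteq> \<beta>2 \<and>
                               i - 1 \<in> \<beta>1 \<and> i \<in> \<beta>2}.
              \<alpha> (map fst X) {\<beta>1, \<beta>2} * cumulant \<alpha> \<Phi> a I (nths X \<beta>1) *
                cumulant \<alpha> \<Phi> a I (nths X \<beta>2))"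
proof -
  define u where "u = map (\<lambda>l. (f l, a (f l) l)) [1..<i]"
  define v where "v = map (\<lambda>l. (f l, a (f l) l)) [Suc (Suc i)..<Suc n]"
  define x where "x = (q, a q i)"
  define y where "y = (q, a q (Suc i))"
  have i: "1 \<le> i" "i < n" using i_range by auto
  have eval: "eval_monomial a X = u @ [x, y] @ v"
    unfolding X_def upt_split_pair[OF i] using fi fi1 by (simp add: u_def v_def x_def y_def eval_monomial_def)
  have eval': "eval_monomial a2 Xt = u @ [(fst x, snd x * snd y)] @ v"
    by (simp add: Xt_def u_def v_def x_def y_def a2_def eval_monomial_def)
  have X: "is_monomial I X" using f_def i by (auto simp: is_monomial_def X_def)
  have "Inl l \<in> It (f l)" if "l \<in> {1..<i} \<union> {Suc (Suc i)..<Suc n}" for l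
    using that f_def[of l] i by (auto simp: It_def)
  then have Xt: "is_monomial It Xt" by (auto simp: is_monomial_def Xt_def It_def)
  have "length u = i - 1" "Suc (i - 1) = i" using i by (simp_all add: u_def)
  then show ?thesis
    using cumulant_merge_adjacent[OF adm _ X eval Xt eval'] word_moment_merge[of \<Phi> u x y v]
    by (simp add: moment_eq_word_moment eval eval' x_def y_def)
qed

end
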